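(* In the setting of the theorem on differential equations for the conserved quantities (with $\widetilde H_0$, $\widetilde K_0$ as defined there and $g$ associated to $f$ via $B$), the functions $\widetilde H_0(\cdot,\varepsilon)$ and $\widetilde K_0(\cdot,\varepsilon)$ are in involution with respect to both brackets $\{F,G\}_J=(\nabla F)^TJ(x)\nabla G$ and $\{F,G\}_\Pi=(\nabla F)^T\Pi(x)\nabla G$, where $\Pi(x)=J(x)-\varepsilon^2J(x)\mathcal HJ(x)\mathcal HJ(x)$: that is, $\{\widetilde H_0,\widetilde K_0\}_J=0$ and $\{\widetilde H_0,\widetilde K_0\}_\Pi=0$.
   Context: Fix an integer $n\ge 2$. Points of $\mathbb R^{2n}$ are $x=(x_1,\dots,x_{2n})^{T}$; write $u=(x_1,\dots,x_n)^T$. Let $X(u)$ be the $n\times n$ matrix with entries $X(u)_{ij}=x_{k}$ where $k\in\{1,\dots,n\}$, $k\equiv i+j-1 \pmod n$, and let $J(x)=\begin{pmatrix}0&X(u)\\-X(u)&0\end{pmatrix}$. Let $\mathcal P$ be the $n\times n$ cyclic shift matrix ($\mathcal P_{i,i+1}=1$ for $1\le i\le n-1$, $\mathcal P_{n,1}=1$, all other entries $0$) and $A=\begin{pmatrix}\mathcal P&0\\0&\mathcal P\end{pmatrix}$. An admissible Hamiltonian is a homogeneous quadratic form $H(x)=\tfrac12 x^T\mathcal H x$ with a constant symmetric matrix $\mathcal H=\nabla^2H$ satisfying $A\mathcal H=\mathcal H A^T$; its Hamiltonian vector field is $f(x)=J(x)\nabla H(x)$. Associated vector fields: let $B=\sum_{i=0}^{n-1}\alpha_iA^i$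 with $\alpha_i\in\mathbb C$ and $B^2=I$; for an admissible $H_0$ with vector field $f$, put $K_0(x)=\tfrac12 x^T B\mathcal H x$ and $g=J\nabla K_0=B^Tf$. With $\mathcal K=B\mathcal H$, define $\widetilde H_0(x,\varepsilon)=x^T\mathcal H(I-\varepsilon^2(J(x)\mathcal H)^2)^{-1}x$ and $\widetilde K_0(x,\varepsilon)=x^T\mathcal K(I-\varepsilon^2(J(x)\mathcal K)^2)^{-1}x$. *)

theory Defs
  imports Complex_Main "Jordan_Normal_Form.Gauss_Jordan_Elimination"
begin

(* Indices are 0-based: coordinates x_0..x_{2n-1}; the paper's x_k is x $ (k-1). *)

(* X(u)_{ij} = x_k with k == i+j-1 (mod n) (1-based)  <=>  0-based entry (i,j) is x $ ((i+j) mod n) *)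
definition Xmat :: "nat \<Rightarrow> real vec \<Rightarrow> real mat" where
  "Xmat n x = mat n n (\<lambda>(i,j). x $ ((i + j) mod n))"

definition Jmat :: "nat \<Rightarrow> real vec \<Rightarrow> real mat" where
  "Jmat n x = four_block_mat (0\<^sub>m n n) (Xmat n x) (- Xmat n x) (0\<^sub>m n n)"

definition Pmat :: "nat \<Rightarrow> real mat" where
  "Pmat n = mat n n (\<lambda>(i,j). if j = (i + 1) mod n then 1 else 0)"

definition Amat :: "nat \<Rightarrow> real mat" where
  "Amat n = four_block_mat (Pmat n) (0\<^sub>m n n) (0\<^sub>m n n) (Pmat n)"

definition Bmat :: "nat \<Rightarrow> (nat \<Rightarrow> complex) \<Rightarrow> complex mat" where
  "Bmat n \<alpha> = foldr (\<lambda>i M. \<alpha> i \<cdot>\<^sub>m (map_mat complex_of_real (Amat n) ^\<^sub>m i) + M) [0..<n]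
                 (0\<^sub>m (2*n) (2*n))"

(* matrix inverse (meaningful when the matrix is invertible) *)
definition minv :: "complex mat \<Rightarrow> complex mat" where
  "minv M = the (mat_inverse M)"

definition cvec :: "real vec \<Rightarrow> complex vec" where
  "cvec x = map_vec complex_of_real x"

definition Jc :: "nat \<Rightarrow> real vec \<Rightarrow> complex mat" where
  "Jc n x = map_mat complex_of_real (Jmat n x)"

definition Dmat :: "nat \<Rightarrow> complex mat \<Rightarrow> real \<Rightarrow> real vec \<Rightarrow> complex mat" where
  "Dmat n M eps x = 1\<^sub>m (2*n) - (complex_of_real (eps^2)) \<cdot>\<^sub>m ((Jc n x * M) * (Jc n x * M))"

definition Qtilde :: "nat \<Rightarrow> complex mat \<Rightarrow> real \<Rightarrow> real vec \<Rightarrow> complex" where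
  "Qtilde n M eps x = cvec x \<bullet> ((M * minv (Dmat n M eps x)) *\<^sub>v cvec x)"

definition pderiv_at :: "nat \<Rightarrow> (real vec \<Rightarrow> complex) \<Rightarrow> real vec \<Rightarrow> nat \<Rightarrow> complex" where
  "pderiv_at N F x i = (THE d. ((\<lambda>t::real. F (x + t \<cdot>\<^sub>v unit_vec N i)) has_vector_derivative d) (at 0))"

definition grad :: "nat \<Rightarrow> (real vec \<Rightarrow> complex) \<Rightarrow> real vec \<Rightarrow> complex vec" where
  "grad N F x = vec N (\<lambda>i. pderiv_at N F x i)"

definition bracket :: "nat \<Rightarrow> complex mat \<Rightarrow> (real vec \<Rightarrow> complex) \<Rightarrow> (real vec \<Rightarrow> complex) \<Rightarrow> real vec \<Rightarrow> complex" where
  "bracket N M F G x = grad N F x \<bullet> (M *\<^sub>v grad N G x)"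

definition Pimat :: "nat \<Rightarrow> real mat \<Rightarrow> real \<Rightarrow> real vec \<Rightarrow> complex mat" where
  "Pimat n H eps x = map_mat complex_of_real
      (Jmat n x - (eps^2) \<cdot>\<^sub>m (Jmat n x * H * Jmat n x * H * Jmat n x))"

end

theory Submission
  imports Defs "Jordan_Normal_Form.Determinant"
begin

text \<open>
  Put \<open>G = D\<^sub>H(x)\<^sup>-\<^sup>1\<close> with \<open>D\<^sub>M(x) = I - \<epsilon>\<^sup>2(J(x)M)\<^sup>2\<close>. Since \<open>J\<close> is linear in \<open>x\<close>, differentiating
  \<open>x\<^sup>T M D\<^sub>M(x)\<^sup>-\<^sup>1 x\<close> gives an explicit gradient built from \<open>MG\<close>, \<open>J(x)\<close> and the vectors
  \<open>(p\<^sup>T (\<partial>\<^sub>iJ) q)\<^sub>i\<close>. As a polynomial in the block shift \<open>A\<close>, the matrix \<open>B\<close> satisfies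
  \<open>B\<^sup>TJ = JB\<close> and \<open>BH = HB\<^sup>T\<close>; with \<open>B\<^sup>2 = I\<close> this yields \<open>D\<^sub>B\<^sub>H = D\<^sub>H\<close> and
  \<open>\<nabla>K\<^sub>0 = B \<nabla>H\<^sub>0\<close> for the two conserved quantities. Both \<open>S = J\<close> and \<open>S = \<Pi>\<close> are
  skew-symmetric with \<open>B\<^sup>TS = SB\<close>, so \<open>SB\<close> is skew and the bracket \<open>g\<^sup>T S B g\<close> vanishes.
\<close>

section \<open>The block shift\<close>

text \<open>\<open>Amat n\<close> is the permutation matrix of \<open>blk_succ n\<close>, the cyclic successor acting
  separately on each half of \<open>{0..<2n}\<close>; \<open>blk_pred n\<close> is its inverse.\<close>

definition blk_succ :: "nat \<Rightarrow> nat \<Rightarrow> nat" where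
  "blk_succ n i = (if i < n then Suc i mod n else n + Suc (i - n) mod n)"

definition blk_pred :: "nat \<Rightarrow> nat \<Rightarrow> nat" where
  "blk_pred n i = (if i < n then (i + n - 1) mod n else n + (i - n + n - 1) mod n)"

lemma blk_succ_less: assumes "i < 2*n" shows "blk_succ n i < 2*n"
proof -
  have "Suc i mod n < n" "Suc (i - n) mod n < n" using assms by simp_all
  then have "Suc i mod n < 2*n" "n + Suc (i - n) mod n < 2*n" by linarith+
  then show ?thesis unfolding blk_succ_def by simp
qed

lemma blk_pred_less: assumes "i < 2*n" shows "blk_pred n i < 2*n"
proof -
  have "(i + n - 1) mod n < n" "(i - n + n - 1) mod n < n" using assms by simp_all
  then have "(i + n - 1) mod n < 2*n" "n + (i - n + n - 1) mod n < 2*n" by linarith+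
  then show ?thesis unfolding blk_pred_def by simp
qed

lemma blk_pred_low: "i < n \<Longrightarrow> blk_pred n i = (i + n - 1) mod n" "i < n \<Longrightarrow> blk_pred n i < n"
  unfolding blk_pred_def by auto

lemma blk_pred_high: "n \<le> i \<Longrightarrow> blk_pred n i = n + (i - n + n - 1) mod n" "n \<le> i \<Longrightarrow> n \<le> blk_pred n i"
  unfolding blk_pred_def by auto

lemma eq_Suc_mod_iff:
  assumes k: "k < n" and l: "l < n"
  shows "(k = Suc l mod n) = (l = (k + n - 1) mod n)"
proof -
  have pred: "(k + n - 1) mod n = (if k = 0 then n - 1 else k - 1)"
  proof (cases "k = 0")
    case False
    then have "k + n - 1 = (k - 1) + n" by simp
    then have "(k + n - 1) mod n = (k - 1) mod n" by simp
    then show ?thesis using False k by simp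
  qed (use l in simp)
  have succ: "Suc l mod n = (if Suc l = n then 0 else Suc l)"
    using l by (cases "Suc l = n") simp_all
  show ?thesis unfolding pred succ using k l by (cases "k = 0"; cases "Suc l = n") auto
qed

lemma pred_mod_eq_iff:
  assumes i: "i < n"
  shows "((a + n - 1) mod n = i) = (a mod n = Suc i mod n)"
proof -
  have n: "0 < n" using i by simp
  have "(a mod n + (n - 1)) mod n = (a + (n - 1)) mod n" by (simp add: mod_add_left_eq)
  moreover have "a mod n + (n - 1) = a mod n + n - 1" "a + (n - 1) = a + n - 1" using n by auto
  ultimately have "(a mod n + n - 1) mod n = (a + n - 1) mod n" by simp
  then show ?thesis using eq_Suc_mod_iff[of "a mod n" n i] i n by auto
qed

lemma blk_succ_eq_iff: "i < 2*n \<Longrightarrow> k < 2*n \<Longrightarrow> (k = blk_succ n i) = (i = blk_pred n k)"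
  unfolding blk_succ_def blk_pred_def
  using eq_Suc_mod_iff[of k n i] eq_Suc_mod_iff[of "k - n" n "i - n"]
  by (cases "i < n"; cases "k < n") (auto simp: less_diff_conv2)

lemma blk_succ_pred: "i < 2*n \<Longrightarrow> blk_succ n (blk_pred n i) = i"
  using blk_succ_eq_iff[of "blk_pred n i" n i] blk_pred_less by auto

lemma mult_mat_vec_carrier_square[simp]:
  "A \<in> carrier_mat N N \<Longrightarrow> u \<in> carrier_vec N \<Longrightarrow> A *\<^sub>v u \<in> carrier_vec N"
  by simp

lemma mult_carrier_mat_square[simp]:
  "A \<in> carrier_mat N N \<Longrightarrow> B \<in> carrier_mat N N \<Longrightarrow> A * B \<in> carrier_mat N N"
  by simp

lemma Amat_carrier[simp]: "Amat n \<in> carrier_mat (2*n) (2*n)"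
  unfolding Amat_def Pmat_def by auto

lemma Amat_dims[simp]: "dim_row (Amat n) = 2*n" "dim_col (Amat n) = 2*n"
  unfolding Amat_def Pmat_def by (auto simp: mult_2)

lemma Amat_index: "i < 2*n \<Longrightarrow> k < 2*n \<Longrightarrow> Amat n $$ (i,k) = (if k = blk_succ n i then 1 else 0)"
  unfolding Amat_def Pmat_def blk_succ_def by (auto simp: less_diff_conv2)

abbreviation Ac :: "nat \<Rightarrow> complex mat" where
  "Ac n \<equiv> map_mat complex_of_real (Amat n)"

lemma Ac_carrier[simp]: "Ac n \<in> carrier_mat (2*n) (2*n)"
  by simp

lemma Ac_index: "i < 2*n \<Longrightarrow> k < 2*n \<Longrightarrow> Ac n $$ (i,k) = (if k = blk_succ n i then 1 else 0)"
  using Amat_index[of i n k] by simp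

lemma Ac_index_col: "k < 2*n \<Longrightarrow> j < 2*n \<Longrightarrow> Ac n $$ (k,j) = (if k = blk_pred n j then 1 else 0)"
  using Amat_index[of k n j] blk_succ_eq_iff[of k n j] by simp

lemma transpose_Ac_index: "i < 2*n \<Longrightarrow> k < 2*n \<Longrightarrow> (Ac n)\<^sup>T $$ (i,k) = (if k = blk_pred n i then 1 else 0)"
  using Amat_index[of k n i] blk_succ_eq_iff[of k n i] by simp

lemma transpose_Ac_index_col: "k < 2*n \<Longrightarrow> j < 2*n \<Longrightarrow> (Ac n)\<^sup>T $$ (k,j) = (if k = blk_succ n j then 1 else 0)"
  using Amat_index[of j n k] by simp

lemma Jc_carrier[simp]: "Jc n y \<in> carrier_mat (2*n) (2*n)"
  unfolding Jc_def Jmat_def by (auto simp: mult_2)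

lemma Jc_dims[simp]: "dim_row (Jc n y) = 2*n" "dim_col (Jc n y) = 2*n"
  unfolding Jc_def Jmat_def by (auto simp: mult_2)

lemma Jc_index: "i < 2*n \<Longrightarrow> j < 2*n \<Longrightarrow> Jc n y $$ (i,j) =
   (if i < n then (if j < n then 0 else complex_of_real (y $ ((i + (j - n)) mod n)))
    else (if j < n then - complex_of_real (y $ ((i - n + j) mod n)) else 0))"
  unfolding Jc_def Jmat_def Xmat_def by (auto simp: less_diff_conv2)

lemma Jc_skew: "transpose_mat (Jc n y) = - Jc n y"
  by (rule eq_matI) (auto simp: Jc_index ac_simps)

lemma Jc_add_smult:
  assumes x: "x \<in> carrier_vec (2*n)" and e: "e \<in> carrier_vec (2*n)"
  shows "Jc n (x + t \<cdot>\<^sub>v e) = Jc n x + complex_of_real t \<cdot>\<^sub>m Jc n e"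
proof (rule eq_matI)
  fix i j assume "i < dim_row (Jc n x + complex_of_real t \<cdot>\<^sub>m Jc n e)"
    "j < dim_col (Jc n x + complex_of_real t \<cdot>\<^sub>m Jc n e)"
  then have i: "i < 2*n" and j: "j < 2*n" by auto
  have n: "0 < n" using i by simp
  have "(i + (j - n)) mod n < 2*n" "(i - n + j) mod n < 2*n" "(i + j - n) mod n < 2*n"
    using mod_less_divisor[OF n, of "i + (j - n)"] mod_less_divisor[OF n, of "i - n + j"]
      mod_less_divisor[OF n, of "i + j - n"] by linarith+
  moreover have "\<And>k. k < 2*n \<Longrightarrow> (x + t \<cdot>\<^sub>v e) $ k = x $ k + t * e $ k" using x e by auto
  ultimately show "Jc n (x + t \<cdot>\<^sub>v e) $$ (i,j) = (Jc n x + complex_of_real t \<cdot>\<^sub>m Jc n e) $$ (i,j)"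
    using i j x e by (simp add: Jc_index algebra_simps)
qed auto

lemma sum_delta_mult:
  assumes "a < (m::nat)"
  shows "(\<Sum>k\<in>{0..<m}. (if k = a then 1 else 0) * f k) = (f a :: 'a :: semiring_1)"
    "(\<Sum>k\<in>{0..<m}. f k * (if k = a then 1 else 0)) = (f a :: 'a :: semiring_1)"
  using assms by (simp_all add: if_distrib[of "\<lambda>c. c * _"] if_distrib[of "\<lambda>c. _ * c"] sum.delta
      cong: if_cong)

lemma index_mult_mat_sum:
  "A \<in> carrier_mat nr m \<Longrightarrow> B \<in> carrier_mat m nc \<Longrightarrow> i < nr \<Longrightarrow> j < nc \<Longrightarrow>
   (A * B) $$ (i,j) = (\<Sum>k\<in>{0..<m}. A $$ (i,k) * B $$ (k,j))"
  by (auto simp: scalar_prod_def intro!: sum.cong)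

lemma index_Ac_mult:
  assumes M: "M \<in> carrier_mat (2*n) m" and i: "i < 2*n" and j: "j < m"
  shows "(Ac n * M) $$ (i,j) = M $$ (blk_succ n i, j)"
proof -
  have "(Ac n * M) $$ (i,j) = (\<Sum>k\<in>{0..<2*n}. (if k = blk_succ n i then 1 else 0) * M $$ (k,j))"
    using index_mult_mat_sum[OF Ac_carrier M i j] by (auto simp: Ac_index[OF i] intro!: sum.cong)
  then show ?thesis using sum_delta_mult(1)[OF blk_succ_less[OF i]] by simp
qed

lemma index_transpose_Ac_mult:
  assumes M: "M \<in> carrier_mat (2*n) m" and i: "i < 2*n" and j: "j < m"
  shows "((Ac n)\<^sup>T * M) $$ (i,j) = M $$ (blk_pred n i, j)"
proof -
  have "((Ac n)\<^sup>T * M) $$ (i,j) = (\<Sum>k\<in>{0..<2*n}. (if k = blk_pred n i then 1 else 0) * M $$ (k,j))"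
    using index_mult_mat_sum[OF _ M i j, of "(Ac n)\<^sup>T"] by (auto simp: transpose_Ac_index[OF i] intro!: sum.cong)
  then show ?thesis using sum_delta_mult(1)[OF blk_pred_less[OF i]] by simp
qed

lemma index_mult_Ac:
  assumes M: "M \<in> carrier_mat m (2*n)" and i: "i < m" and j: "j < 2*n"
  shows "(M * Ac n) $$ (i,j) = M $$ (i, blk_pred n j)"
proof -
  have "(M * Ac n) $$ (i,j) = (\<Sum>k\<in>{0..<2*n}. M $$ (i,k) * (if k = blk_pred n j then 1 else 0))"
    using index_mult_mat_sum[OF M Ac_carrier i j] j
    by (auto simp: Ac_index_col simp del: index_map_mat intro!: sum.cong)
  then show ?thesis using sum_delta_mult(2)[OF blk_pred_less[OF j]] by simp
qed

lemma index_mult_transpose_Ac: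
  assumes M: "M \<in> carrier_mat m (2*n)" and i: "i < m" and j: "j < 2*n"
  shows "(M * (Ac n)\<^sup>T) $$ (i,j) = M $$ (i, blk_succ n j)"
proof -
  have "(M * (Ac n)\<^sup>T) $$ (i,j) = (\<Sum>k\<in>{0..<2*n}. M $$ (i,k) * (if k = blk_succ n j then 1 else 0))"
    using index_mult_mat_sum[OF M _ i j, of "(Ac n)\<^sup>T"] j
    by (auto simp: transpose_Ac_index_col simp del: index_map_mat index_transpose_mat intro!: sum.cong)
  then show ?thesis using sum_delta_mult(2)[OF blk_succ_less[OF j]] by simp
qed

lemma index_Ac_mult_vec:
  assumes v: "v \<in> carrier_vec (2*n)" and i: "i < 2*n"
  shows "(Ac n *\<^sub>v v) $ i = v $ blk_succ n i"
proof -
  have "(Ac n *\<^sub>v v) $ i = (\<Sum>k\<in>{0..<2*n}. (if k = blk_succ n i then 1 else 0) * v $ k)"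
    using i v by (auto simp: scalar_prod_def Amat_index intro!: sum.cong)
  then show ?thesis using sum_delta_mult(1)[OF blk_succ_less[OF i]] by simp
qed

text \<open>\<open>X(u)\<^sub>i\<^sub>j\<close> depends only on \<open>i + j mod n\<close>, so shifting the rows of \<open>J(y)\<close> back is the same as
  shifting its columns back.\<close>

lemma transpose_Ac_Jc: "(Ac n)\<^sup>T * Jc n y = Jc n y * Ac n"
proof (rule eq_matI)
  fix i j assume "i < dim_row (Jc n y * Ac n)" "j < dim_col (Jc n y * Ac n)"
  then have i: "i < 2*n" and j: "j < 2*n" by auto
  have n: "0 < n" using i by simp
  have "Jc n y $$ (blk_pred n i, j) = Jc n y $$ (i, blk_pred n j)"
  proof (cases "i < n"; cases "j < n")
    assume a: "i < n" "\<not> j < n"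
    have "((i + n - 1) mod n + (j - n)) mod n = (i + n - 1 + (j - n)) mod n"
      "(i + (j - n + n - 1) mod n) mod n = (i + (j - n + n - 1)) mod n"
      by (simp_all add: mod_add_left_eq mod_add_right_eq)
    moreover have "i + n - 1 + (j - n) = i + (j - n + n - 1)" using n a by auto
    ultimately show ?thesis
      using blk_pred_low[of i n] blk_pred_high[of n j] blk_pred_less[OF i] blk_pred_less[OF j] i j a
      by (simp add: Jc_index)
  next
    assume a: "\<not> i < n" "j < n"
    have "((i - n + n - 1) mod n + j) mod n = (i - n + n - 1 + j) mod n"
      "(i - n + (j + n - 1) mod n) mod n = (i - n + (j + n - 1)) mod n"
      by (simp_all add: mod_add_left_eq mod_add_right_eq)
    moreover have "i - n + n - 1 + j = i - n + (j + n - 1)" using n a by auto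
    ultimately show ?thesis
      using blk_pred_high[of n i] blk_pred_low[of j n] blk_pred_less[OF i] blk_pred_less[OF j] i j a
      by (simp add: Jc_index)
  qed (use blk_pred_low blk_pred_high blk_pred_less[OF i] blk_pred_less[OF j] i j in
      \<open>simp_all add: Jc_index\<close>)
  then show "((Ac n)\<^sup>T * Jc n y) $$ (i,j) = (Jc n y * Ac n) $$ (i,j)"
    using index_transpose_Ac_mult[OF Jc_carrier i j] index_mult_Ac[OF Jc_carrier i j] by simp
qed auto

lemma mod_eq_blk_succ_iff:
  assumes "0 < n"
  shows "(c mod n = blk_succ n i) = ((c + n - 1) mod n = i)"
proof (cases "i < n")
  case True
  then show ?thesis using pred_mod_eq_iff[OF True, of c] unfolding blk_succ_def by auto
next
  case False
  have "c mod n < n" "(c + n - 1) mod n < n" "n \<le> blk_succ n i"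
    using assms False unfolding blk_succ_def by auto
  then have "c mod n \<noteq> blk_succ n i" "(c + n - 1) mod n \<noteq> i" using False by linarith+
  then show ?thesis by blast
qed

lemma Jc_unit_blk_succ:
  assumes i: "i < 2*n"
  shows "Jc n (unit_vec (2*n) (blk_succ n i)) = Jc n (unit_vec (2*n) i) * Ac n"
proof (rule eq_matI)
  fix r s assume "r < dim_row (Jc n (unit_vec (2*n) i) * Ac n)" "s < dim_col (Jc n (unit_vec (2*n) i) * Ac n)"
  then have r: "r < 2*n" and s: "s < 2*n" by auto
  have n: "0 < n" using i by simp
  note key = mod_eq_blk_succ_iff[OF n, of _ i]
  have "Jc n (unit_vec (2*n) (blk_succ n i)) $$ (r,s) = Jc n (unit_vec (2*n) i) $$ (r, blk_pred n s)"
  proof (cases "r < n"; cases "s < n")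
    assume a: "r < n" "\<not> s < n"
    have m: "(r + (s - n)) mod n < 2*n" "(r + (blk_pred n s - n)) mod n < 2*n"
      using mod_less_divisor[OF n, of "r + (s - n)"] mod_less_divisor[OF n, of "r + (blk_pred n s - n)"]
      by linarith+
    have "(r + (blk_pred n s - n)) mod n = (r + (s - n + n - 1) mod n) mod n" using blk_pred_high[of n s] a by simp
    also have "\<dots> = (r + (s - n + n - 1)) mod n" by (simp add: mod_add_right_eq)
    also have "r + (s - n + n - 1) = r + (s - n) + n - 1" using n by simp
    finally show ?thesis
      using blk_pred_high[of n s] blk_pred_less[OF s] r s a m key[of "r + (s - n)"]
      by (simp add: Jc_index unit_vec_def)
  next
    assume a: "\<not> r < n" "s < n"
    have m: "(r - n + s) mod n < 2*n" "(r - n + blk_pred n s) mod n < 2*n"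
      using mod_less_divisor[OF n, of "r - n + s"] mod_less_divisor[OF n, of "r - n + blk_pred n s"]
      by linarith+
    have "(r - n + blk_pred n s) mod n = (r - n + (s + n - 1) mod n) mod n" using blk_pred_low[of s n] a by simp
    also have "\<dots> = (r - n + (s + n - 1)) mod n" by (simp add: mod_add_right_eq)
    also have "r - n + (s + n - 1) = r - n + s + n - 1" using n by simp
    finally show ?thesis
      using blk_pred_low[of s n] blk_pred_less[OF s] r s a m key[of "r - n + s"]
      by (simp add: Jc_index unit_vec_def)
  qed (use blk_pred_low blk_pred_high blk_pred_less[OF s] r s in \<open>simp_all add: Jc_index\<close>)
  then show "Jc n (unit_vec (2*n) (blk_succ n i)) $$ (r,s) = (Jc n (unit_vec (2*n) i) * Ac n) $$ (r,s)"
    using index_mult_Ac[OF Jc_carrier r s] by simp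
qed auto

text \<open>\<open>A\<close> is a permutation matrix, so \<open>A\<^sup>T = A\<^sup>-\<^sup>1\<close>.\<close>

lemma transpose_Ac_intertwine:
  assumes Z: "Z \<in> carrier_mat (2*n) (2*n)" and AZ: "Ac n * Z = Z * (Ac n)\<^sup>T"
  shows "(Ac n)\<^sup>T * Z = Z * Ac n"
proof (rule eq_matI)
  fix i j assume "i < dim_row (Z * Ac n)" "j < dim_col (Z * Ac n)"
  then have i: "i < 2*n" and j: "j < 2*n" using Z by auto
  have shift: "Z $$ (blk_succ n a, b) = Z $$ (a, blk_succ n b)" if "a < 2*n" "b < 2*n" for a b
    using arg_cong[OF AZ, of "\<lambda>M. M $$ (a,b)"] index_Ac_mult[OF Z that] index_mult_transpose_Ac[OF Z that]
    by simp
  show "((Ac n)\<^sup>T * Z) $$ (i,j) = (Z * Ac n) $$ (i,j)"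
    using shift[OF blk_pred_less[OF i] blk_pred_less[OF j]] blk_succ_pred[OF i] blk_succ_pred[OF j]
      index_transpose_Ac_mult[OF Z i j] index_mult_Ac[OF Z i j] by simp
qed (use Z in auto)

lemma Ac_Hc:
  assumes Hdim: "H \<in> carrier_mat (2*n) (2*n)" and Hadm: "Amat n * H = H * transpose_mat (Amat n)"
  shows "Ac n * map_mat complex_of_real H = map_mat complex_of_real H * transpose_mat (Ac n)"
proof -
  have "Ac n * map_mat complex_of_real H = map_mat complex_of_real (H * transpose_mat (Amat n))"
    by (simp add: of_real_hom.mat_hom_mult[OF Amat_carrier Hdim, symmetric] Hadm)
  also have "\<dots> = map_mat complex_of_real H * transpose_mat (Ac n)"
    using of_real_hom.mat_hom_mult[OF Hdim, of "transpose_mat (Amat n)" "2*n"] by (simp add: map_mat_transpose)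
  finally show ?thesis .
qed

section \<open>Polynomials in a matrix\<close>

abbreviation mat_poly :: "(nat \<Rightarrow> 'a::comm_ring_1) \<Rightarrow> nat \<Rightarrow> nat list \<Rightarrow> 'a mat \<Rightarrow> 'a mat" where
  "mat_poly \<alpha> N ks X \<equiv> foldr (\<lambda>i M. \<alpha> i \<cdot>\<^sub>m (X ^\<^sub>m i) + M) ks (0\<^sub>m N N)"

lemma mat_poly_carrier: "X \<in> carrier_mat N N \<Longrightarrow> mat_poly \<alpha> N ks X \<in> carrier_mat N N"
  by (induction ks) auto

lemma pow_mat_intertwine:
  assumes X: "X \<in> carrier_mat N N" and Y: "Y \<in> carrier_mat N N" and Z: "Z \<in> carrier_mat N N"
    and XZ: "X * Z = Z * Y"
  shows "X ^\<^sub>m k * Z = Z * Y ^\<^sub>m (k :: nat)"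
proof (induction k)
  case (Suc k)
  have "X ^\<^sub>m Suc k * Z = X ^\<^sub>m k * (X * Z)"
    using assoc_mult_mat[OF pow_carrier_mat[OF X, of k] X Z] by simp
  also have "\<dots> = (X ^\<^sub>m k * Z) * Y"
    using assoc_mult_mat[OF pow_carrier_mat[OF X, of k] Z Y] by (simp add: XZ)
  also have "\<dots> = Z * Y ^\<^sub>m Suc k"
    using assoc_mult_mat[OF Z pow_carrier_mat[OF Y, of k] Y] by (simp add: Suc)
  finally show ?case .
qed (use X Y Z in simp)

lemma mat_poly_intertwine:
  assumes X: "X \<in> carrier_mat N N" and Y: "Y \<in> carrier_mat N N" and Z: "Z \<in> carrier_mat N N"
    and XZ: "X * Z = Z * Y"
  shows "mat_poly \<alpha> N ks X * Z = Z * mat_poly \<alpha> N ks Y"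
proof (induction ks)
  case (Cons a ks)
  have P: "mat_poly \<alpha> N ks X \<in> carrier_mat N N" "mat_poly \<alpha> N ks Y \<in> carrier_mat N N"
    using mat_poly_carrier X Y by auto
  have "mat_poly \<alpha> N (a # ks) X * Z = \<alpha> a \<cdot>\<^sub>m (X ^\<^sub>m a * Z) + Z * mat_poly \<alpha> N ks Y"
    using add_mult_distrib_mat[OF _ P(1) Z, of "\<alpha> a \<cdot>\<^sub>m X ^\<^sub>m a"] X
      mult_smult_assoc_mat[OF pow_carrier_mat[OF X] Z] Cons by simp
  also have "\<dots> = Z * mat_poly \<alpha> N (a # ks) Y"
    using pow_mat_intertwine[OF X Y Z XZ, of a] mult_smult_distrib[OF Z pow_carrier_mat[OF Y]]
      mult_add_distrib_mat[OF Z _ P(2), of "\<alpha> a \<cdot>\<^sub>m Y ^\<^sub>m a"] Y by simp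
  finally show ?case .
qed (use Z in simp)

lemma transpose_pow_mat:
  assumes X: "(X :: 'a :: comm_ring_1 mat) \<in> carrier_mat N N"
  shows "transpose_mat (X ^\<^sub>m k) = (transpose_mat X) ^\<^sub>m k"
proof (induction k)
  case (Suc k)
  have "X ^\<^sub>m Suc k = X * X ^\<^sub>m k" using pow_mat_intertwine[OF X X X refl, of k] by simp
  then show ?case using transpose_mult[of X N N "X ^\<^sub>m k" N] X Suc by simp
qed (use X in simp)

lemma transpose_smult_mat: "transpose_mat (k \<cdot>\<^sub>m A) = k \<cdot>\<^sub>m transpose_mat A"
  by (rule eq_matI) auto

lemma transpose_mat_poly:
  assumes X: "X \<in> carrier_mat N N"
  shows "transpose_mat (mat_poly \<alpha> N ks X) = mat_poly \<alpha> N ks (transpose_mat X)"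
proof (induction ks)
  case (Cons a ks)
  have "transpose_mat (mat_poly \<alpha> N (a # ks) X)
      = transpose_mat (\<alpha> a \<cdot>\<^sub>m X ^\<^sub>m a) + transpose_mat (mat_poly \<alpha> N ks X)"
    using transpose_add[OF _ mat_poly_carrier[OF X], of "\<alpha> a \<cdot>\<^sub>m X ^\<^sub>m a"] X by simp
  then show ?case using Cons transpose_pow_mat[OF X] by (simp add: transpose_smult_mat)
qed simp

lemma smult_mat_mult_vec: "A \<in> carrier_mat nr nc \<Longrightarrow> v \<in> carrier_vec nc \<Longrightarrow> (k \<cdot>\<^sub>m A) *\<^sub>v v = k \<cdot>\<^sub>v (A *\<^sub>v v)"
  by (rule eq_vecI) (auto simp: scalar_prod_def sum_distrib_left ac_simps intro!: sum.cong)

lemma pow_mat_mult_vec_commute: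
  assumes X: "X \<in> carrier_mat N N"
    and f_carrier: "\<And>u. u \<in> carrier_vec N \<Longrightarrow> f u \<in> carrier_vec N"
    and f_X: "\<And>u. u \<in> carrier_vec N \<Longrightarrow> f (X *\<^sub>v u) = X *\<^sub>v f u"
    and w: "w \<in> carrier_vec N"
  shows "f (X ^\<^sub>m k *\<^sub>v w) = X ^\<^sub>m k *\<^sub>v f w"
  using w
proof (induction k arbitrary: w)
  case (Suc k)
  have "f (X ^\<^sub>m Suc k *\<^sub>v w) = X ^\<^sub>m k *\<^sub>v f (X *\<^sub>v w)"
    using assoc_mult_mat_vec[OF pow_carrier_mat[OF X, of k] X Suc.prems] Suc.IH[of "X *\<^sub>v w"] X Suc.prems
    by simp
  then show ?case
    using assoc_mult_mat_vec[OF pow_carrier_mat[OF X, of k] X f_carrier[OF Suc.prems]] f_X[OF Suc.prems]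
    by simp
qed (use X f_carrier in simp)

lemma mat_poly_mult_vec_commute:
  assumes X: "X \<in> carrier_mat N N"
    and f_add: "\<And>u v. u \<in> carrier_vec N \<Longrightarrow> v \<in> carrier_vec N \<Longrightarrow> f (u + v) = f u + f v"
    and f_smult: "\<And>c u. u \<in> carrier_vec N \<Longrightarrow> f (c \<cdot>\<^sub>v u) = c \<cdot>\<^sub>v f u"
    and f_carrier: "\<And>u. u \<in> carrier_vec N \<Longrightarrow> f u \<in> carrier_vec N"
    and f_X: "\<And>u. u \<in> carrier_vec N \<Longrightarrow> f (X *\<^sub>v u) = X *\<^sub>v f u"
    and u: "u \<in> carrier_vec N"
  shows "f (mat_poly \<alpha> N ks X *\<^sub>v u) = mat_poly \<alpha> N ks X *\<^sub>v f u"
proof -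
  have pow: "f (X ^\<^sub>m k *\<^sub>v w) = X ^\<^sub>m k *\<^sub>v f w" if "w \<in> carrier_vec N" for k w
    by (rule pow_mat_mult_vec_commute[OF X]) (use f_carrier f_X that in auto)
  have zero: "f (0\<^sub>v N) = 0\<^sub>v N"
  proof -
    have "0 \<cdot>\<^sub>v 0\<^sub>v N = (0\<^sub>v N :: 'a vec)" by (rule eq_vecI) auto
    then have "f (0\<^sub>v N) = 0 \<cdot>\<^sub>v f (0\<^sub>v N)" using f_smult[of "0\<^sub>v N" 0] by simp
    moreover have "0 \<cdot>\<^sub>v f (0\<^sub>v N) = 0\<^sub>v N" using f_carrier[of "0\<^sub>v N"] by (intro eq_vecI) auto
    ultimately show ?thesis by simp
  qed
  show ?thesis
  proof (induction ks)
    case Nil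
    have "0\<^sub>m N N *\<^sub>v w = 0\<^sub>v N" if "w \<in> carrier_vec N" for w :: "'a vec"
      using that by (intro eq_vecI) (auto simp: scalar_prod_def)
    then show ?case using u zero f_carrier[OF u] by simp
  next
    case (Cons a ks)
    have P: "mat_poly \<alpha> N ks X \<in> carrier_mat N N" using mat_poly_carrier[OF X] .
    have unfold: "mat_poly \<alpha> N (a # ks) X *\<^sub>v w = \<alpha> a \<cdot>\<^sub>v (X ^\<^sub>m a *\<^sub>v w) + mat_poly \<alpha> N ks X *\<^sub>v w"
      if "w \<in> carrier_vec N" for w
      using add_mult_distrib_mat_vec[OF _ P that, of "\<alpha> a \<cdot>\<^sub>m X ^\<^sub>m a"] X
        smult_mat_mult_vec[OF pow_carrier_mat[OF X] that] by simp
    show ?case unfolding unfold[OF u] unfold[OF f_carrier[OF u]]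
      using f_add f_smult pow[OF u, of a] Cons X P u by simp
  qed
qed

lemma Bmat_mat_poly: "Bmat n \<alpha> = mat_poly \<alpha> (2*n) [0..<n] (Ac n)"
  unfolding Bmat_def by simp

lemma Bmat_carrier[simp]: "Bmat n \<alpha> \<in> carrier_mat (2*n) (2*n)"
  unfolding Bmat_mat_poly by (rule mat_poly_carrier) simp

lemma transpose_Bmat_Jc: "transpose_mat (Bmat n \<alpha>) * Jc n y = Jc n y * Bmat n \<alpha>"
  unfolding Bmat_mat_poly transpose_mat_poly[OF Ac_carrier]
  by (rule mat_poly_intertwine) (auto simp: transpose_Ac_Jc)

lemma Bmat_Hc:
  assumes "H \<in> carrier_mat (2*n) (2*n)" and "Amat n * H = H * transpose_mat (Amat n)"
  shows "Bmat n \<alpha> * map_mat complex_of_real H = map_mat complex_of_real H * transpose_mat (Bmat n \<alpha>)"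
  unfolding Bmat_mat_poly transpose_mat_poly[OF Ac_carrier]
  by (rule mat_poly_intertwine) (use assms Ac_Hc in auto)

lemma transpose_Bmat_Hc:
  assumes "H \<in> carrier_mat (2*n) (2*n)" and "Amat n * H = H * transpose_mat (Amat n)"
  shows "transpose_mat (Bmat n \<alpha>) * map_mat complex_of_real H = map_mat complex_of_real H * Bmat n \<alpha>"
  unfolding Bmat_mat_poly transpose_mat_poly[OF Ac_carrier]
  by (rule mat_poly_intertwine) (use assms transpose_Ac_intertwine[OF _ Ac_Hc[OF assms]] in auto)

text \<open>\<open>Jform_grad n p q\<close> is the gradient of the linear function \<open>x \<mapsto> p\<^sup>T J(x) q\<close>.\<close>

definition Jform_grad :: "nat \<Rightarrow> complex vec \<Rightarrow> complex vec \<Rightarrow> complex vec" where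
  "Jform_grad n p q = vec (2*n) (\<lambda>i. p \<bullet> (Jc n (unit_vec (2*n) i) *\<^sub>v q))"

lemma Jform_grad_carrier[simp]: "Jform_grad n p q \<in> carrier_vec (2*n)"
  unfolding Jform_grad_def by simp

lemma Jform_grad_dim[simp]: "dim_vec (Jform_grad n p q) = 2*n"
  unfolding Jform_grad_def by simp

lemma Jform_grad_add:
  assumes p: "p \<in> carrier_vec (2*n)" and u: "u \<in> carrier_vec (2*n)" and v: "v \<in> carrier_vec (2*n)"
  shows "Jform_grad n p (u + v) = Jform_grad n p u + Jform_grad n p v"
proof (rule eq_vecI)
  fix i assume "i < dim_vec (Jform_grad n p u + Jform_grad n p v)"
  then have i: "i < 2*n" by simp
  let ?J = "Jc n (unit_vec (2*n) i)"
  have "p \<bullet> (?J *\<^sub>v (u + v)) = p \<bullet> (?J *\<^sub>v u + ?J *\<^sub>v v)"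
    using mult_add_distrib_mat_vec[OF Jc_carrier u v] by simp
  also have "\<dots> = p \<bullet> (?J *\<^sub>v u) + p \<bullet> (?J *\<^sub>v v)"
    by (rule scalar_prod_add_distrib[OF p]) (use u v in auto)
  finally show "Jform_grad n p (u + v) $ i = (Jform_grad n p u + Jform_grad n p v) $ i"
    unfolding Jform_grad_def using i by simp
qed simp

lemma Jform_grad_smult:
  "p \<in> carrier_vec (2*n) \<Longrightarrow> u \<in> carrier_vec (2*n) \<Longrightarrow> Jform_grad n p (c \<cdot>\<^sub>v u) = c \<cdot>\<^sub>v Jform_grad n p u"
  unfolding Jform_grad_def by (rule eq_vecI) (auto simp: mult_mat_vec[OF Jc_carrier])

lemma Jform_grad_Ac:
  assumes q: "q \<in> carrier_vec (2*n)"
  shows "Jform_grad n p (Ac n *\<^sub>v q) = Ac n *\<^sub>v Jform_grad n p q"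
proof (rule eq_vecI)
  fix i assume "i < dim_vec (Ac n *\<^sub>v Jform_grad n p q)"
  then have i: "i < 2*n" by simp
  have "Jform_grad n p (Ac n *\<^sub>v q) $ i = p \<bullet> ((Jc n (unit_vec (2*n) i) * Ac n) *\<^sub>v q)"
    unfolding Jform_grad_def using i assoc_mult_mat_vec[OF Jc_carrier Ac_carrier q] by simp
  also have "\<dots> = Jform_grad n p q $ blk_succ n i"
    unfolding Jform_grad_def using Jc_unit_blk_succ[OF i] blk_succ_less[OF i] by simp
  also have "\<dots> = (Ac n *\<^sub>v Jform_grad n p q) $ i" using index_Ac_mult_vec[OF Jform_grad_carrier i] by simp
  finally show "Jform_grad n p (Ac n *\<^sub>v q) $ i = (Ac n *\<^sub>v Jform_grad n p q) $ i" .
qed simp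

lemma Jform_grad_Bmat_right:
  "p \<in> carrier_vec (2*n) \<Longrightarrow> q \<in> carrier_vec (2*n) \<Longrightarrow>
   Jform_grad n p (Bmat n \<alpha> *\<^sub>v q) = Bmat n \<alpha> *\<^sub>v Jform_grad n p q"
  unfolding Bmat_mat_poly
  by (rule mat_poly_mult_vec_commute[where f = "Jform_grad n p"])
    (auto simp: Jform_grad_add Jform_grad_smult Jform_grad_Ac)

lemma Jform_grad_Bmat_left:
  assumes p: "p \<in> carrier_vec (2*n)" and q: "q \<in> carrier_vec (2*n)"
  shows "Jform_grad n (Bmat n \<alpha> *\<^sub>v p) q = Jform_grad n p (Bmat n \<alpha> *\<^sub>v q)"
proof (rule eq_vecI)
  fix i assume "i < dim_vec (Jform_grad n p (Bmat n \<alpha> *\<^sub>v q))"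
  then have i: "i < 2*n" by simp
  let ?B = "Bmat n \<alpha>" and ?J = "Jc n (unit_vec (2*n) i)"
  have "(?B *\<^sub>v p) \<bullet> (?J *\<^sub>v q) = p \<bullet> (transpose_mat ?B *\<^sub>v (?J *\<^sub>v q))"
    using transpose_vec_mult_scalar[of "transpose_mat ?B" "2*n" "2*n" "?J *\<^sub>v q" p] p q by simp
  also have "\<dots> = p \<bullet> ((transpose_mat ?B * ?J) *\<^sub>v q)"
    using assoc_mult_mat_vec[of "transpose_mat ?B" "2*n" "2*n" ?J "2*n" q] q by simp
  also have "\<dots> = p \<bullet> ((?J * ?B) *\<^sub>v q)" by (simp add: transpose_Bmat_Jc)
  also have "\<dots> = p \<bullet> (?J *\<^sub>v (?B *\<^sub>v q))"
    using assoc_mult_mat_vec[of ?J "2*n" "2*n" ?B "2*n" q] q by simp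
  finally show "Jform_grad n (?B *\<^sub>v p) q $ i = Jform_grad n p (?B *\<^sub>v q) $ i"
    unfolding Jform_grad_def using i by simp
qed simp

lemma skew_quadratic_form_zero:
  assumes S: "S \<in> carrier_mat N N" and skew: "transpose_mat S = - S" and v: "v \<in> carrier_vec N"
  shows "v \<bullet> (S *\<^sub>v v) = (0 :: 'a :: {idom, ring_char_0})"
proof -
  have "v \<bullet> (S *\<^sub>v v) = (transpose_mat S *\<^sub>v v) \<bullet> v" by (rule transpose_vec_mult_scalar[OF S v v, symmetric])
  also have "\<dots> = - (v \<bullet> (S *\<^sub>v v))"
    using skew S v comm_scalar_prod[of "S *\<^sub>v v" N v] by simp
  finally show ?thesis by simp
qed

lemma skew_bracket_intertwining_zero:
  assumes S: "S \<in> carrier_mat N N" and B: "B \<in> carrier_mat N N"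
    and skew: "transpose_mat S = - S" and BS: "transpose_mat B * S = S * B"
    and g: "g \<in> carrier_vec N"
  shows "g \<bullet> (S *\<^sub>v (B *\<^sub>v g)) = (0 :: 'a :: {idom, ring_char_0})"
proof -
  have "transpose_mat (S * B) = - (S * B)"
    using transpose_mult[OF S B] skew BS S B by simp
  then show ?thesis
    using skew_quadratic_form_zero[of "S * B" N g] assoc_mult_mat_vec[OF S B g] S B g by simp
qed

text \<open>Instances of the ring laws with all dimensions equal to \<open>N\<close>, so that the simplifier can
  discharge their carrier side conditions.\<close>

context
  fixes N :: nat
begin

lemma sq_assoc: "A \<in> carrier_mat N N \<Longrightarrow> B \<in> carrier_mat N N \<Longrightarrow> C \<in> carrier_mat N N \<Longrightarrow>
  (A * B) * C = A * (B * (C :: 'a :: comm_ring_1 mat))"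
  by simp
lemma sq_assoc_v: "A \<in> carrier_mat N N \<Longrightarrow> B \<in> carrier_mat N N \<Longrightarrow> v \<in> carrier_vec N \<Longrightarrow>
  (A * B) *\<^sub>v v = A *\<^sub>v (B *\<^sub>v (v :: 'a :: comm_ring_1 vec))"
  by simp
lemma sq_distl: "A \<in> carrier_mat N N \<Longrightarrow> B \<in> carrier_mat N N \<Longrightarrow> C \<in> carrier_mat N N \<Longrightarrow>
  A * (B + C) = A * B + A * (C :: 'a :: comm_ring_1 mat)"
  by (rule mult_add_distrib_mat)
lemma sq_distr: "A \<in> carrier_mat N N \<Longrightarrow> B \<in> carrier_mat N N \<Longrightarrow> C \<in> carrier_mat N N \<Longrightarrow>
  (A + B) * C = A * C + B * (C :: 'a :: comm_ring_1 mat)"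
  by (rule add_mult_distrib_mat)
lemma sq_minus_l: "A \<in> carrier_mat N N \<Longrightarrow> B \<in> carrier_mat N N \<Longrightarrow> C \<in> carrier_mat N N \<Longrightarrow>
  A * (B - C) = A * B - A * (C :: 'a :: comm_ring_1 mat)"
  by (rule mult_minus_distrib_mat)
lemma sq_minus_r: "A \<in> carrier_mat N N \<Longrightarrow> B \<in> carrier_mat N N \<Longrightarrow> C \<in> carrier_mat N N \<Longrightarrow>
  (A - B) * C = A * C - B * (C :: 'a :: comm_ring_1 mat)"
  by (rule minus_mult_distrib_mat)
lemma sq_smult_r: "A \<in> carrier_mat N N \<Longrightarrow> B \<in> carrier_mat N N \<Longrightarrow>
  A * (c \<cdot>\<^sub>m B) = c \<cdot>\<^sub>m (A * (B :: 'a :: comm_ring_1 mat))"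
  by (rule mult_smult_distrib)
lemma sq_smult_l: "A \<in> carrier_mat N N \<Longrightarrow> B \<in> carrier_mat N N \<Longrightarrow>
  (c \<cdot>\<^sub>m A) * B = c \<cdot>\<^sub>m (A * (B :: 'a :: comm_ring_1 mat))"
  by (rule mult_smult_assoc_mat)
lemma sq_neg_r: "A \<in> carrier_mat N N \<Longrightarrow> B \<in> carrier_mat N N \<Longrightarrow> A * (- B) = - (A * (B :: 'a :: comm_ring_1 mat))"
  by simp
lemma sq_neg_l: "A \<in> carrier_mat N N \<Longrightarrow> B \<in> carrier_mat N N \<Longrightarrow> (- A) * B = - (A * (B :: 'a :: comm_ring_1 mat))"
  by simp
lemma sq_zero_minus: "A \<in> carrier_mat N N \<Longrightarrow> 0\<^sub>m N N - A = - (A :: 'a :: comm_ring_1 mat)"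
  by (rule eq_matI) auto
lemma sq_smult_add: "A \<in> carrier_mat N N \<Longrightarrow> B \<in> carrier_mat N N \<Longrightarrow>
  c \<cdot>\<^sub>m (A + B) = c \<cdot>\<^sub>m A + c \<cdot>\<^sub>m (B :: 'a :: comm_ring_1 mat)"
  by (rule add_smult_distrib_left_mat)
lemma sq_mv_add: "A \<in> carrier_mat N N \<Longrightarrow> B \<in> carrier_mat N N \<Longrightarrow> v \<in> carrier_vec N \<Longrightarrow>
  (A + B) *\<^sub>v v = A *\<^sub>v v + B *\<^sub>v (v :: 'a :: comm_ring_1 vec)"
  by (rule add_mult_distrib_mat_vec)
lemma sq_mv_smult: "A \<in> carrier_mat N N \<Longrightarrow> v \<in> carrier_vec N \<Longrightarrow>
  (c \<cdot>\<^sub>m A) *\<^sub>v v = c \<cdot>\<^sub>v (A *\<^sub>v (v :: 'a :: comm_ring_1 vec))"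
  by (rule smult_mat_mult_vec)
lemma sq_mv_neg: "A \<in> carrier_mat N N \<Longrightarrow> v \<in> carrier_vec N \<Longrightarrow> (- A) *\<^sub>v v = - (A *\<^sub>v (v :: 'a :: comm_ring_1 vec))"
  by simp
lemma sq_sp_add: "u \<in> carrier_vec N \<Longrightarrow> v \<in> carrier_vec N \<Longrightarrow> w \<in> carrier_vec N \<Longrightarrow>
  u \<bullet> (v + w) = u \<bullet> v + u \<bullet> (w :: 'a :: comm_ring_1 vec)"
  by (rule scalar_prod_add_distrib)
lemma sq_sp_smult: "u \<in> carrier_vec N \<Longrightarrow> v \<in> carrier_vec N \<Longrightarrow> u \<bullet> (c \<cdot>\<^sub>v v) = c * (u \<bullet> (v :: 'a :: comm_ring_1 vec))"
  by simp
lemma sq_sp_neg: "u \<in> carrier_vec N \<Longrightarrow> v \<in> carrier_vec N \<Longrightarrow> u \<bullet> (- v) = - (u \<bullet> (v :: 'a :: comm_ring_1 vec))"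
  by simp
lemma sq_tr_sp: "A \<in> carrier_mat N N \<Longrightarrow> y \<in> carrier_vec N \<Longrightarrow> x \<in> carrier_vec N \<Longrightarrow>
  (transpose_mat A *\<^sub>v y) \<bullet> x = y \<bullet> (A *\<^sub>v (x :: 'a :: comm_ring_1 vec))"
  by (rule transpose_vec_mult_scalar)
lemma sq_tr_mult: "A \<in> carrier_mat N N \<Longrightarrow> B \<in> carrier_mat N N \<Longrightarrow>
  transpose_mat (A * B) = transpose_mat B * transpose_mat (A :: 'a :: comm_ring_1 mat)"
  by (rule transpose_mult)
lemma sq_add_carrier: "A \<in> carrier_mat N N \<Longrightarrow> B \<in> carrier_mat N N \<Longrightarrow> A + B \<in> carrier_mat N N"
  by simp
lemma sq_minus_carrier: "A \<in> carrier_mat N N \<Longrightarrow> B \<in> carrier_mat N N \<Longrightarrow> A - B \<in> carrier_mat N N"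
  by (simp add: minus_carrier_mat)
lemma sq_neg_carrier: "A \<in> carrier_mat N N \<Longrightarrow> - A \<in> carrier_mat N N"
  by simp
lemma sq_smult_carrier: "A \<in> carrier_mat N N \<Longrightarrow> c \<cdot>\<^sub>m A \<in> carrier_mat N N"
  by simp
lemma sq_vadd_carrier: "u \<in> carrier_vec N \<Longrightarrow> v \<in> carrier_vec N \<Longrightarrow> u + v \<in> carrier_vec N"
  by simp
lemma sq_vsmult_carrier: "u \<in> carrier_vec N \<Longrightarrow> c \<cdot>\<^sub>v u \<in> carrier_vec N"
  by simp
lemma sq_vneg_carrier: "u \<in> carrier_vec N \<Longrightarrow> - u \<in> carrier_vec N"
  by simp

lemmas sq_rules = sq_assoc sq_assoc_v sq_distl sq_distr sq_minus_l sq_minus_r sq_smult_r sq_smult_l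
  sq_neg_r sq_neg_l sq_zero_minus sq_smult_add sq_mv_add sq_mv_smult sq_mv_neg sq_sp_add sq_sp_smult
  sq_sp_neg sq_tr_sp sq_add_carrier sq_minus_carrier sq_neg_carrier sq_smult_carrier
  sq_vadd_carrier sq_vsmult_carrier sq_vneg_carrier

end

section \<open>Derivatives of matrix-valued curves\<close>

lemma differentiable_has_vector_derivative_some:
  fixes f :: "real \<Rightarrow> complex"
  assumes "f differentiable (at 0)"
  shows "(f has_vector_derivative (SOME d. (f has_vector_derivative d) (at 0))) (at 0)"
proof -
  obtain D where D: "(f has_derivative D) (at 0)" using assms unfolding differentiable_def by auto
  have lin: "bounded_linear D" using D by (rule has_derivative_bounded_linear)
  have "D = (\<lambda>h. h *\<^sub>R D 1)"
  proof
    fix h :: real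
    have "D (h *\<^sub>R 1) = h *\<^sub>R D 1" by (rule linear_scale[OF bounded_linear.linear[OF lin]])
    then show "D h = h *\<^sub>R D 1" by simp
  qed
  then have "(f has_vector_derivative D 1) (at 0)" using D unfolding has_vector_derivative_def by simp
  then show ?thesis by (rule someI)
qed

lemma has_vector_derivative_imp_differentiable: "(f has_vector_derivative d) (at 0) \<Longrightarrow> f differentiable (at 0)"
  unfolding has_vector_derivative_def differentiable_def by auto

lemma has_vector_derivative_unique_at:
  fixes f :: "real \<Rightarrow> complex"
  assumes "(f has_vector_derivative d1) (at 0)" "(f has_vector_derivative d2) (at 0)"
  shows "d1 = d2"
proof -
  have "(\<lambda>h. h *\<^sub>R d1) = (\<lambda>h. h *\<^sub>R d2)"
    using has_derivative_unique assms unfolding has_vector_derivative_def by blast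
  then show ?thesis by (metis scaleR_one)
qed

lemma has_vector_derivative_transform_eventually:
  fixes f g :: "real \<Rightarrow> complex"
  assumes "(f has_vector_derivative d) (at 0)" "\<forall>\<^sub>F t in at 0. f t = g t" "f 0 = g 0"
  shows "(g has_vector_derivative d) (at 0)"
  using has_derivative_transform_eventually[of f "\<lambda>h. h *\<^sub>R d" 0 UNIV g] assms
  unfolding has_vector_derivative_def by auto

lemma has_vector_derivative_affine: "((\<lambda>t. a + complex_of_real t * b) has_vector_derivative b) (at 0)"
proof -
  have "((\<lambda>t. complex_of_real t) has_vector_derivative complex_of_real 1) (at 0)"
    by (rule has_vector_derivative_of_real) (rule DERIV_ident)
  then have "((\<lambda>t. complex_of_real t * b) has_vector_derivative complex_of_real 1 * b) (at 0)"
    by (rule has_vector_derivative_mult_left)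
  then have "((\<lambda>t. a + complex_of_real t * b) has_vector_derivative 0 + complex_of_real 1 * b) (at 0)"
    by (intro has_vector_derivative_add) simp_all
  then show ?thesis by simp
qed

definition mat_differentiable :: "(real \<Rightarrow> complex mat) \<Rightarrow> nat \<Rightarrow> bool" where
  "mat_differentiable F N \<longleftrightarrow> (\<forall>t. F t \<in> carrier_mat N N) \<and> (\<forall>i<N. \<forall>j<N. (\<lambda>t. F t $$ (i,j)) differentiable (at 0))"

definition has_mat_deriv :: "(real \<Rightarrow> complex mat) \<Rightarrow> complex mat \<Rightarrow> nat \<Rightarrow> bool" where
  "has_mat_deriv F F' N \<longleftrightarrow> (\<forall>t. F t \<in> carrier_mat N N) \<and> F' \<in> carrier_mat N N \<and>
     (\<forall>i<N. \<forall>j<N. ((\<lambda>t. F t $$ (i,j)) has_vector_derivative F' $$ (i,j)) (at 0))"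

lemma mat_differentiable_has_mat_deriv:
  "mat_differentiable F N \<Longrightarrow>
   has_mat_deriv F (mat N N (\<lambda>(i,j). SOME d. ((\<lambda>t. F t $$ (i,j)) has_vector_derivative d) (at 0))) N"
  unfolding mat_differentiable_def has_mat_deriv_def using differentiable_has_vector_derivative_some by auto

lemma has_mat_deriv_imp_mat_differentiable: "has_mat_deriv F F' N \<Longrightarrow> mat_differentiable F N"
  unfolding mat_differentiable_def has_mat_deriv_def using has_vector_derivative_imp_differentiable by blast

lemma has_mat_deriv_const: "A \<in> carrier_mat N N \<Longrightarrow> has_mat_deriv (\<lambda>t. A) (0\<^sub>m N N) N"
  unfolding has_mat_deriv_def by auto

lemma has_mat_deriv_diff:
  assumes F: "has_mat_deriv F F' N" and G: "has_mat_deriv G G' N"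
  shows "has_mat_deriv (\<lambda>t. F t - G t) (F' - G') N"
  unfolding has_mat_deriv_def
proof (intro conjI allI impI)
  have cF: "\<And>t. F t \<in> carrier_mat N N" and cG: "\<And>t. G t \<in> carrier_mat N N"
    and cF': "F' \<in> carrier_mat N N" and cG': "G' \<in> carrier_mat N N" using F G unfolding has_mat_deriv_def by auto
  show "\<And>t. F t - G t \<in> carrier_mat N N" using cF cG by (simp add: minus_carrier_mat)
  show "F' - G' \<in> carrier_mat N N" using cF' cG' by (simp add: minus_carrier_mat)
  fix i j assume i: "i < N" and j: "j < N"
  have e: "(\<lambda>t. (F t - G t) $$ (i,j)) = (\<lambda>t. F t $$ (i,j) - G t $$ (i,j))"
  proof (rule ext) fix t show "(F t - G t) $$ (i,j) = F t $$ (i,j) - G t $$ (i,j)" using cF[of t] cG[of t] i j by simp qed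
  have "((\<lambda>t. F t $$ (i,j) - G t $$ (i,j)) has_vector_derivative F' $$ (i,j) - G' $$ (i,j)) (at 0)"
    using F G i j unfolding has_mat_deriv_def by (auto intro!: has_vector_derivative_diff)
  then show "((\<lambda>t. (F t - G t) $$ (i,j)) has_vector_derivative (F' - G') $$ (i,j)) (at 0)"
    unfolding e using cF' cG' i j by simp
qed

lemma has_mat_deriv_smult:
  assumes F: "has_mat_deriv F F' N"
  shows "has_mat_deriv (\<lambda>t. k \<cdot>\<^sub>m F t) (k \<cdot>\<^sub>m F') N"
  unfolding has_mat_deriv_def
proof (intro conjI allI impI)
  have cF: "\<And>t. F t \<in> carrier_mat N N" and cF': "F' \<in> carrier_mat N N" using F unfolding has_mat_deriv_def by auto
  show "\<And>t. k \<cdot>\<^sub>m F t \<in> carrier_mat N N" using cF by simp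
  show "k \<cdot>\<^sub>m F' \<in> carrier_mat N N" using cF' by simp
  fix i j assume i: "i < N" and j: "j < N"
  have e: "(\<lambda>t. (k \<cdot>\<^sub>m F t) $$ (i,j)) = (\<lambda>t. k * F t $$ (i,j))"
  proof (rule ext) fix t show "(k \<cdot>\<^sub>m F t) $$ (i,j) = k * F t $$ (i,j)" using cF[of t] i j by simp qed
  have "((\<lambda>t. k * F t $$ (i,j)) has_vector_derivative k * F' $$ (i,j)) (at 0)"
    using F i j unfolding has_mat_deriv_def by (auto intro!: has_vector_derivative_mult_right)
  then show "((\<lambda>t. (k \<cdot>\<^sub>m F t) $$ (i,j)) has_vector_derivative (k \<cdot>\<^sub>m F') $$ (i,j)) (at 0)"
    unfolding e using cF' i j by simp
qed

lemma has_mat_deriv_mult: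
  assumes F: "has_mat_deriv F F' N" and G: "has_mat_deriv G G' N"
  shows "has_mat_deriv (\<lambda>t. F t * G t) (F' * G 0 + F 0 * G') N"
  unfolding has_mat_deriv_def
proof (intro conjI allI impI)
  have cF: "\<And>t. F t \<in> carrier_mat N N" and cG: "\<And>t. G t \<in> carrier_mat N N"
    and cF': "F' \<in> carrier_mat N N" and cG': "G' \<in> carrier_mat N N" using F G unfolding has_mat_deriv_def by auto
  show "\<And>t. F t * G t \<in> carrier_mat N N" using cF cG by simp
  show "F' * G 0 + F 0 * G' \<in> carrier_mat N N" using cF' cG' cF cG by simp
  fix i j assume i: "i < N" and j: "j < N"
  have e: "(\<lambda>t. (F t * G t) $$ (i,j)) = (\<lambda>t. \<Sum>k\<in>{0..<N}. F t $$ (i,k) * G t $$ (k,j))"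
  proof (rule ext) fix t show "(F t * G t) $$ (i,j) = (\<Sum>k\<in>{0..<N}. F t $$ (i,k) * G t $$ (k,j))"
      by (rule index_mult_mat_sum[OF cF cG i j]) qed
  have "((\<lambda>t. \<Sum>k\<in>{0..<N}. F t $$ (i,k) * G t $$ (k,j)) has_vector_derivative
        (\<Sum>k\<in>{0..<N}. F 0 $$ (i,k) * G' $$ (k,j) + F' $$ (i,k) * G 0 $$ (k,j))) (at 0)"
    using F G i j unfolding has_mat_deriv_def
    by (intro has_vector_derivative_sum has_vector_derivative_mult) auto
  moreover have "(\<Sum>k\<in>{0..<N}. F 0 $$ (i,k) * G' $$ (k,j) + F' $$ (i,k) * G 0 $$ (k,j)) = (F' * G 0 + F 0 * G') $$ (i,j)"
    using index_mult_mat_sum[OF cF' cG i j, of 0] index_mult_mat_sum[OF cF cG' i j, of 0] cF' cG' cF[of 0] cG[of 0] i j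
    by (simp add: sum.distrib add.commute)
  ultimately show "((\<lambda>t. (F t * G t) $$ (i,j)) has_vector_derivative (F' * G 0 + F 0 * G') $$ (i,j)) (at 0)"
    unfolding e by simp
qed

lemma has_mat_deriv_Jc_line:
  assumes x: "x \<in> carrier_vec (2*n)" and e: "e \<in> carrier_vec (2*n)"
  shows "has_mat_deriv (\<lambda>t. Jc n (x + t \<cdot>\<^sub>v e)) (Jc n e) (2*n)"
  unfolding has_mat_deriv_def
proof (intro conjI allI impI)
  show "\<And>t. Jc n (x + t \<cdot>\<^sub>v e) \<in> carrier_mat (2*n) (2*n)" by simp
  show "Jc n e \<in> carrier_mat (2*n) (2*n)" by simp
  fix i j assume i: "i < 2*n" and j: "j < 2*n"
  have ee: "(\<lambda>t. Jc n (x + t \<cdot>\<^sub>v e) $$ (i,j)) = (\<lambda>t. Jc n x $$ (i,j) + complex_of_real t * Jc n e $$ (i,j))"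
  proof (rule ext) fix t show "Jc n (x + t \<cdot>\<^sub>v e) $$ (i,j) = Jc n x $$ (i,j) + complex_of_real t * Jc n e $$ (i,j)"
      unfolding Jc_add_smult[OF x e] using i j by simp qed
  show "((\<lambda>t. Jc n (x + t \<cdot>\<^sub>v e) $$ (i,j)) has_vector_derivative Jc n e $$ (i,j)) (at 0)"
    unfolding ee by (rule has_vector_derivative_affine)
qed

lemma has_vector_derivative_bilinear_form:
  fixes u w :: "real \<Rightarrow> complex vec" and P :: "real \<Rightarrow> complex mat"
  assumes cu: "\<And>t. u t \<in> carrier_vec N" and cw: "\<And>t. w t \<in> carrier_vec N"
    and cu': "u' \<in> carrier_vec N" and cw': "w' \<in> carrier_vec N"
    and du: "\<And>i. i < N \<Longrightarrow> ((\<lambda>t. u t $ i) has_vector_derivative u' $ i) (at 0)"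
    and dw: "\<And>i. i < N \<Longrightarrow> ((\<lambda>t. w t $ i) has_vector_derivative w' $ i) (at 0)"
    and P: "has_mat_deriv P P' N"
  shows "((\<lambda>t. u t \<bullet> (P t *\<^sub>v w t)) has_vector_derivative
           u' \<bullet> (P 0 *\<^sub>v w 0) + u 0 \<bullet> (P' *\<^sub>v w 0) + u 0 \<bullet> (P 0 *\<^sub>v w')) (at 0)"
proof -
  have cP: "\<And>t. P t \<in> carrier_mat N N" and cP': "P' \<in> carrier_mat N N" using P unfolding has_mat_deriv_def by auto
  have dP: "\<And>i j. i < N \<Longrightarrow> j < N \<Longrightarrow> ((\<lambda>t. P t $$ (i,j)) has_vector_derivative P' $$ (i,j)) (at 0)"
    using P unfolding has_mat_deriv_def by auto
  have expand: "\<And>a A b. a \<in> carrier_vec N \<Longrightarrow> A \<in> carrier_mat N N \<Longrightarrow> b \<in> carrier_vec N \<Longrightarrow>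
     a \<bullet> (A *\<^sub>v b) = (\<Sum>i\<in>{0..<N}. a $ i * (\<Sum>j\<in>{0..<N}. A $$ (i,j) * b $ j))"
    by (auto simp: scalar_prod_def intro!: sum.cong)
  have e: "(\<lambda>t. u t \<bullet> (P t *\<^sub>v w t)) = (\<lambda>t. \<Sum>i\<in>{0..<N}. u t $ i * (\<Sum>j\<in>{0..<N}. P t $$ (i,j) * w t $ j))"
    using expand[OF cu cP cw] by auto
  have d: "((\<lambda>t. \<Sum>i\<in>{0..<N}. u t $ i * (\<Sum>j\<in>{0..<N}. P t $$ (i,j) * w t $ j)) has_vector_derivative
    (\<Sum>i\<in>{0..<N}. u 0 $ i * (\<Sum>j\<in>{0..<N}. P 0 $$ (i,j) * w' $ j + P' $$ (i,j) * w 0 $ j)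
        + u' $ i * (\<Sum>j\<in>{0..<N}. P 0 $$ (i,j) * w 0 $ j))) (at 0)"
    by (intro has_vector_derivative_sum has_vector_derivative_mult) (simp_all add: du dP dw)
  have v: "(\<Sum>i\<in>{0..<N}. u 0 $ i * (\<Sum>j\<in>{0..<N}. P 0 $$ (i,j) * w' $ j + P' $$ (i,j) * w 0 $ j)
        + u' $ i * (\<Sum>j\<in>{0..<N}. P 0 $$ (i,j) * w 0 $ j))
     = u' \<bullet> (P 0 *\<^sub>v w 0) + u 0 \<bullet> (P' *\<^sub>v w 0) + u 0 \<bullet> (P 0 *\<^sub>v w')"
    unfolding expand[OF cu' cP cw] expand[OF cu cP' cw] expand[OF cu cP cw']
    by (simp add: sum.distrib distrib_left algebra_simps)
  show ?thesis using d unfolding e v .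
qed

lemma differentiable_prod_at:
  fixes f :: "'b \<Rightarrow> real \<Rightarrow> complex"
  assumes "finite S" "\<forall>a\<in>S. f a differentiable (at 0)"
  shows "(\<lambda>t. \<Prod>a\<in>S. f a t) differentiable (at 0)"
  using assms
proof (induction S rule: finite_induct)
  case empty then show ?case by simp
next
  case (insert a S)
  then show ?case by (simp add: differentiable_mult)
qed

lemma det_differentiable:
  assumes F: "mat_differentiable F N"
  shows "(\<lambda>t. det (F t)) differentiable (at 0)"
proof -
  have c: "\<And>t. F t \<in> carrier_mat N N" using F unfolding mat_differentiable_def by auto
  have e: "(\<lambda>t. det (F t)) = (\<lambda>t. \<Sum>p\<in>{p. p permutes {0..<N}}. signof p * (\<Prod>i=0..<N. F t $$ (i, p i)))"
    using det_def'[OF c] by auto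
  have "(\<lambda>t. \<Sum>p\<in>{p. p permutes {0..<N}}. signof p * (\<Prod>i=0..<N. F t $$ (i, p i))) differentiable (at 0)"
  proof (rule differentiable_sum)
    show "finite {p. p permutes {0..<N}}" by (rule finite_permutations) simp
    show "\<forall>p\<in>{p. p permutes {0..<N}}. (\<lambda>t. signof p * (\<Prod>i=0..<N. F t $$ (i, p i))) differentiable (at 0)"
    proof
      fix p assume "p \<in> {p. p permutes {0..<N}}"
      then have p: "p permutes {0..<N}" by simp
      have "\<forall>i\<in>{0..<N}. (\<lambda>t. F t $$ (i, p i)) differentiable (at 0)"
        using F p permutes_in_image[OF p] unfolding mat_differentiable_def by auto
      then have "(\<lambda>t. \<Prod>i=0..<N. F t $$ (i, p i)) differentiable (at 0)"
        by (intro differentiable_prod_at) auto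
      then show "(\<lambda>t. signof p * (\<Prod>i=0..<N. F t $$ (i, p i))) differentiable (at 0)"
        by (intro differentiable_mult differentiable_const)
    qed
  qed
  then show ?thesis using e by simp
qed

lemma mat_differentiable_delete:
  assumes F: "mat_differentiable F N"
  shows "mat_differentiable (\<lambda>t. mat_delete (F t) a b) (N - 1)"
  unfolding mat_differentiable_def
proof (intro conjI allI impI)
  have c: "\<And>t. F t \<in> carrier_mat N N" using F unfolding mat_differentiable_def by auto
  show "\<And>t. mat_delete (F t) a b \<in> carrier_mat (N - 1) (N - 1)" using mat_delete_carrier[OF c] by simp
  fix i j assume i: "i < N - 1" and j: "j < N - 1"
  have e: "(\<lambda>t. mat_delete (F t) a b $$ (i,j)) = (\<lambda>t. F t $$ (if i < a then i else Suc i, if j < b then j else Suc j))"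
  proof (rule ext)
    fix t show "mat_delete (F t) a b $$ (i,j) = F t $$ (if i < a then i else Suc i, if j < b then j else Suc j)"
      using c[of t] i j unfolding mat_delete_def by auto
  qed
  have "(if i < a then i else Suc i) < N" "(if j < b then j else Suc j) < N" using i j by auto
  then show "(\<lambda>t. mat_delete (F t) a b $$ (i,j)) differentiable (at 0)"
    unfolding e using F unfolding mat_differentiable_def by auto
qed

lemma adj_mat_entry_differentiable:
  assumes F: "mat_differentiable F N" and i: "i < N" and j: "j < N"
  shows "(\<lambda>t. adj_mat (F t) $$ (i,j)) differentiable (at 0)"
proof -
  have c: "\<And>t. F t \<in> carrier_mat N N" using F unfolding mat_differentiable_def by auto
  have e: "(\<lambda>t. adj_mat (F t) $$ (i,j)) = (\<lambda>t. (-1)^(j+i) * det (mat_delete (F t) j i))"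
  proof (rule ext)
    fix t show "adj_mat (F t) $$ (i,j) = (-1)^(j+i) * det (mat_delete (F t) j i)"
      using c[of t] i j unfolding adj_mat_def cofactor_def by auto
  qed
  show ?thesis unfolding e
    by (intro differentiable_mult differentiable_const det_differentiable[OF mat_differentiable_delete[OF F]])
qed

text \<open>Unlike \<open>minv\<close> (Gauss--Jordan), the adjugate formula makes the entries of the
  inverse visibly differentiable.\<close>

definition adj_inv :: "complex mat \<Rightarrow> complex mat" where
  "adj_inv D = (1 / det D) \<cdot>\<^sub>m adj_mat D"

lemma adj_inv_carrier:
  assumes D: "D \<in> carrier_mat N N"
  shows "adj_inv D \<in> carrier_mat N N"
  unfolding adj_inv_def using adj_mat(1)[OF D] by simp

lemma adj_inv_inverse:
  assumes D: "D \<in> carrier_mat N N" and d: "det D \<noteq> 0"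
  shows "D * adj_inv D = 1\<^sub>m N" "adj_inv D * D = 1\<^sub>m N"
proof -
  have "D * adj_inv D = (1 / det D) \<cdot>\<^sub>m (D * adj_mat D)"
    unfolding adj_inv_def using mult_smult_distrib[OF D adj_mat(1)[OF D]] by simp
  also have "\<dots> = 1\<^sub>m N" unfolding adj_mat(2)[OF D] by (rule eq_matI) (use d in auto)
  finally show "D * adj_inv D = 1\<^sub>m N" .
  have "adj_inv D * D = (1 / det D) \<cdot>\<^sub>m (adj_mat D * D)"
    unfolding adj_inv_def using mult_smult_assoc_mat[OF adj_mat(1)[OF D] D] by simp
  also have "\<dots> = 1\<^sub>m N" unfolding adj_mat(3)[OF D] by (rule eq_matI) (use d in auto)
  finally show "adj_inv D * D = 1\<^sub>m N" .
qed

lemma mat_differentiable_adj_inv: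
  assumes F: "mat_differentiable F N" and d0: "det (F 0) \<noteq> 0"
  shows "mat_differentiable (\<lambda>t. adj_inv (F t)) N"
  unfolding mat_differentiable_def
proof (intro conjI allI impI)
  have c: "\<And>t. F t \<in> carrier_mat N N" using F unfolding mat_differentiable_def by auto
  show "\<And>t. adj_inv (F t) \<in> carrier_mat N N" using adj_inv_carrier[OF c] .
  fix i j assume i: "i < N" and j: "j < N"
  have e: "(\<lambda>t. adj_inv (F t) $$ (i,j)) = (\<lambda>t. (1 / det (F t)) * adj_mat (F t) $$ (i,j))"
  proof (rule ext)
    fix t show "adj_inv (F t) $$ (i,j) = (1 / det (F t)) * adj_mat (F t) $$ (i,j)"
      using c[of t] i j adj_mat(1)[OF c[of t]] unfolding adj_inv_def by auto
  qed
  show "(\<lambda>t. adj_inv (F t) $$ (i,j)) differentiable (at 0)"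
    unfolding e
    by (intro differentiable_mult differentiable_divide differentiable_const det_differentiable[OF F]
          adj_mat_entry_differentiable[OF F i j] d0)
qed

lemma det_nonzero_if_invertible:
  assumes D: "D \<in> carrier_mat N N" and inv: "invertible_mat D"
  shows "det D \<noteq> (0::complex)"
proof -
  from inv obtain G where G: "inverts_mat D G" "inverts_mat G D" unfolding invertible_mat_def by auto
  have dG: "dim_row G = N" "dim_col G = N" using G D unfolding inverts_mat_def
    by (metis carrier_matD index_mult_mat(2) index_mult_mat(3) index_one_mat(2) index_one_mat(3))+
  then have cG: "G \<in> carrier_mat N N" by auto
  have "D * G = 1\<^sub>m N" using G D unfolding inverts_mat_def by auto
  then have "det D * det G = 1" using det_mult[OF D cG] by simp
  then show ?thesis by auto
qed

lemma minv_eq_adj_inv: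
  assumes D: "D \<in> carrier_mat N N" and d: "det D \<noteq> 0"
  shows "minv D = adj_inv D"
proof -
  have u: "D \<in> Units (ring_mat TYPE(complex) N N)" by (rule det_non_zero_imp_unit[OF D d])
  obtain G where G: "mat_inverse D = Some G"
    using mat_inverse(1)[OF D, where b=N] u by (cases "mat_inverse D") auto
  from mat_inverse(2)[OF D G] have GD: "G * D = 1\<^sub>m N" and cG: "G \<in> carrier_mat N N" by auto
  have "G = G * (D * adj_inv D)" using adj_inv_inverse(1)[OF D d] cG by simp
  also have "\<dots> = (G * D) * adj_inv D" using cG D adj_inv_carrier[OF D] by simp
  also have "\<dots> = adj_inv D" using GD adj_inv_carrier[OF D] by simp
  finally show ?thesis unfolding minv_def G by simp
qed

lemma minv_invertible:
  assumes D: "D \<in> carrier_mat N N" and inv: "invertible_mat D"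
  shows "minv D \<in> carrier_mat N N" "D * minv D = 1\<^sub>m N" "minv D * D = 1\<^sub>m N"
  using minv_eq_adj_inv[OF D det_nonzero_if_invertible[OF D inv]] adj_inv_carrier[OF D]
    adj_inv_inverse[OF D det_nonzero_if_invertible[OF D inv]] by auto

lemma eventually_det_nonzero:
  assumes F: "mat_differentiable F N" and d0: "det (F 0) \<noteq> 0"
  shows "\<forall>\<^sub>F t in at 0. det (F t) \<noteq> 0"
proof -
  obtain D where "((\<lambda>t. det (F t)) has_derivative D) (at 0)"
    using det_differentiable[OF F] unfolding differentiable_def by auto
  then have "((\<lambda>t. det (F t)) \<longlongrightarrow> det (F 0)) (at 0)"
    using has_derivative_continuous unfolding continuous_within by blast
  then show ?thesis by (rule tendsto_imp_eventually_ne) (rule d0)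
qed

text \<open>Differentiating \<open>F(t) F(t)\<^sup>-\<^sup>1 = I\<close>, valid near \<open>t = 0\<close>.\<close>

lemma has_mat_deriv_adj_inv:
  assumes F: "has_mat_deriv F F' N" and d0: "det (F 0) \<noteq> 0"
  shows "has_mat_deriv (\<lambda>t. adj_inv (F t)) (- (adj_inv (F 0) * F' * adj_inv (F 0))) N"
proof -
  have cF: "\<And>t. F t \<in> carrier_mat N N" and cF': "F' \<in> carrier_mat N N"
    using F unfolding has_mat_deriv_def by auto
  let ?G0 = "adj_inv (F 0)"
  have cG0: "?G0 \<in> carrier_mat N N" by (rule adj_inv_carrier[OF cF])
  have Fdiff: "mat_differentiable F N" by (rule has_mat_deriv_imp_mat_differentiable[OF F])
  obtain G' where G: "has_mat_deriv (\<lambda>t. adj_inv (F t)) G' N"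
    using mat_differentiable_has_mat_deriv[OF mat_differentiable_adj_inv[OF Fdiff d0]] by blast
  have cG': "G' \<in> carrier_mat N N" using G unfolding has_mat_deriv_def by auto
  have FG': "F 0 * G' = - (F' * ?G0)"
  proof (rule eq_matI)
    fix i j assume "i < dim_row (- (F' * ?G0))" "j < dim_col (- (F' * ?G0))"
    then have i: "i < N" and j: "j < N" using cF' cG0 by auto
    have d1: "((\<lambda>t. (F t * adj_inv (F t)) $$ (i,j)) has_vector_derivative (F' * ?G0 + F 0 * G') $$ (i,j)) (at 0)"
      using has_mat_deriv_mult[OF F G] i j unfolding has_mat_deriv_def by auto
    have "\<forall>\<^sub>F t in at 0. (1\<^sub>m N :: complex mat) $$ (i,j) = (F t * adj_inv (F t)) $$ (i,j)"
      using eventually_det_nonzero[OF Fdiff d0] by (rule eventually_mono) (simp add: adj_inv_inverse(1)[OF cF])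
    then have d2: "((\<lambda>t. (F t * adj_inv (F t)) $$ (i,j)) has_vector_derivative 0) (at 0)"
      by (rule has_vector_derivative_transform_eventually[rotated])
        (use adj_inv_inverse(1)[OF cF[of 0] d0] in auto)
    show "(F 0 * G') $$ (i,j) = (- (F' * ?G0)) $$ (i,j)"
      using has_vector_derivative_unique_at[OF d1 d2] i j cF[of 0] cF' cG0 cG'
      by (simp add: eq_neg_iff_add_eq_0 add.commute)
  qed (use cF' cG0 cF[of 0] cG' in auto)
  have "G' = (?G0 * F 0) * G'" using adj_inv_inverse(2)[OF cF d0] cG' by simp
  also have "\<dots> = - (?G0 * F' * ?G0)" using cG0 cF[of 0] cF' cG' by (simp add: FG')
  finally show ?thesis using G by simp
qed

section \<open>The gradient of \<open>x\<^sup>T M D\<^sub>M(x)\<^sup>-\<^sup>1 x\<close>\<close>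

lemma cvec_carrier[simp]: "x \<in> carrier_vec N \<Longrightarrow> cvec x \<in> carrier_vec N"
  unfolding cvec_def by simp

lemma cvec_unit_vec: "cvec (unit_vec N i) = (unit_vec N i :: complex vec)"
  by (rule eq_vecI) (auto simp: cvec_def unit_vec_def)

lemma Dmat_carrier: "M \<in> carrier_mat (2*n) (2*n) \<Longrightarrow> Dmat n M eps y \<in> carrier_mat (2*n) (2*n)"
  unfolding Dmat_def by (simp add: minus_carrier_mat)

lemma has_vector_derivative_cvec_line:
  assumes x: "x \<in> carrier_vec N" and e: "e \<in> carrier_vec N" and i: "i < N"
  shows "((\<lambda>t. cvec (x + t \<cdot>\<^sub>v e) $ i) has_vector_derivative cvec e $ i) (at 0)"
proof -
  have "(\<lambda>t. cvec (x + t \<cdot>\<^sub>v e) $ i) = (\<lambda>t. complex_of_real (x $ i) + complex_of_real t * cvec e $ i)"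
    using x e i by (auto simp: cvec_def)
  then show ?thesis by (simp add: has_vector_derivative_affine)
qed

lemma has_mat_deriv_Dmat_line:
  assumes M: "M \<in> carrier_mat (2*n) (2*n)" and x: "x \<in> carrier_vec (2*n)" and e: "e \<in> carrier_vec (2*n)"
  shows "has_mat_deriv (\<lambda>t. Dmat n M eps (x + t \<cdot>\<^sub>v e))
    (0\<^sub>m (2*n) (2*n) - complex_of_real (eps^2) \<cdot>\<^sub>m
       ((Jc n e * M) * (Jc n x * M) + (Jc n x * M) * (Jc n e * M))) (2*n)"
proof -
  have x0: "x + 0 \<cdot>\<^sub>v e = x" using x e by (intro eq_vecI) auto
  have dJM: "has_mat_deriv (\<lambda>t. Jc n (x + t \<cdot>\<^sub>v e) * M) (Jc n e * M) (2*n)"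
    using has_mat_deriv_mult[OF has_mat_deriv_Jc_line[OF x e] has_mat_deriv_const[OF M]] M by simp
  have dS: "has_mat_deriv (\<lambda>t. (Jc n (x + t \<cdot>\<^sub>v e) * M) * (Jc n (x + t \<cdot>\<^sub>v e) * M))
      ((Jc n e * M) * (Jc n x * M) + (Jc n x * M) * (Jc n e * M)) (2*n)"
    using has_mat_deriv_mult[OF dJM dJM] by (simp add: x0)
  show ?thesis
    unfolding Dmat_def by (rule has_mat_deriv_diff[OF has_mat_deriv_const has_mat_deriv_smult[OF dS]]) simp
qed

text \<open>The middle term is \<open>x\<^sup>T M (D(t)\<^sup>-\<^sup>1)' x\<close> with \<open>(D(t)\<^sup>-\<^sup>1)' = -D(0)\<^sup>-\<^sup>1 D'(0) D(0)\<^sup>-\<^sup>1\<close>.\<close>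

lemma Qtilde_directional_deriv:
  fixes M :: "complex mat" and x e :: "real vec"
  assumes M: "M \<in> carrier_mat (2*n) (2*n)" and x: "x \<in> carrier_vec (2*n)" and e: "e \<in> carrier_vec (2*n)"
    and inv: "invertible_mat (Dmat n M eps x)"
  shows "((\<lambda>t. Qtilde n M eps (x + t \<cdot>\<^sub>v e)) has_vector_derivative
      (cvec e \<bullet> ((M * minv (Dmat n M eps x)) *\<^sub>v cvec x)
       + cvec x \<bullet> ((M * (- (minv (Dmat n M eps x) * (0\<^sub>m (2*n) (2*n) - complex_of_real (eps^2) \<cdot>\<^sub>m
            ((Jc n e * M) * (Jc n x * M) + (Jc n x * M) * (Jc n e * M))) * minv (Dmat n M eps x)))) *\<^sub>v cvec x)
       + cvec x \<bullet> ((M * minv (Dmat n M eps x)) *\<^sub>v cvec e))) (at 0)"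
proof -
  let ?N = "2*n" and ?X = "cvec x" and ?E = "cvec e"
  let ?D' = "0\<^sub>m ?N ?N - complex_of_real (eps^2) \<cdot>\<^sub>m
    ((Jc n e * M) * (Jc n x * M) + (Jc n x * M) * (Jc n e * M))"
  define D where "D t = Dmat n M eps (x + t \<cdot>\<^sub>v e)" for t
  have x0: "x + 0 \<cdot>\<^sub>v e = x" using x e by (intro eq_vecI) auto
  have cD: "\<And>t. D t \<in> carrier_mat ?N ?N" unfolding D_def by (rule Dmat_carrier[OF M])
  have dD: "has_mat_deriv D ?D' ?N" unfolding D_def by (rule has_mat_deriv_Dmat_line[OF M x e])
  have D0: "D 0 = Dmat n M eps x" unfolding D_def by (simp add: x0)
  have d0: "det (D 0) \<noteq> 0" using det_nonzero_if_invertible[OF cD inv[folded D0]] .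
  let ?G0 = "adj_inv (D 0)"
  let ?G' = "- (?G0 * ?D' * ?G0)"
  have dG: "has_mat_deriv (\<lambda>t. adj_inv (D t)) ?G' ?N" by (rule has_mat_deriv_adj_inv[OF dD d0])
  have cG: "?G' \<in> carrier_mat ?N ?N" "?G0 \<in> carrier_mat ?N ?N"
    using dG adj_inv_carrier[OF cD] unfolding has_mat_deriv_def by auto
  have dMG: "has_mat_deriv (\<lambda>t. M * adj_inv (D t)) (M * ?G') ?N"
    using has_mat_deriv_mult[OF has_mat_deriv_const[OF M] dG] cG M by simp
  have du: "((\<lambda>t. cvec (x + t \<cdot>\<^sub>v e) $ i) has_vector_derivative ?E $ i) (at 0)" if "i < ?N" for i
    by (rule has_vector_derivative_cvec_line[OF x e that])
  have cu: "\<And>t. cvec (x + t \<cdot>\<^sub>v e) \<in> carrier_vec ?N" using x e by simp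
  define q where "q t = cvec (x + t \<cdot>\<^sub>v e) \<bullet> ((M * adj_inv (D t)) *\<^sub>v cvec (x + t \<cdot>\<^sub>v e))" for t
  have "(q has_vector_derivative
      (?E \<bullet> ((M * ?G0) *\<^sub>v ?X) + ?X \<bullet> ((M * ?G') *\<^sub>v ?X) + ?X \<bullet> ((M * ?G0) *\<^sub>v ?E))) (at 0)"
    using has_vector_derivative_bilinear_form[OF cu cu _ _ du du dMG] x e unfolding q_def by (simp add: x0)
  moreover have "\<forall>\<^sub>F t in at 0. q t = Qtilde n M eps (x + t \<cdot>\<^sub>v e)"
    using eventually_det_nonzero[OF has_mat_deriv_imp_mat_differentiable[OF dD] d0]
    by (rule eventually_mono) (simp add: q_def Qtilde_def D_def[symmetric] minv_eq_adj_inv[OF cD])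
  moreover have "q 0 = Qtilde n M eps (x + 0 \<cdot>\<^sub>v e)"
    using d0 by (simp add: q_def Qtilde_def D_def[symmetric] minv_eq_adj_inv[OF cD])
  ultimately have "((\<lambda>t. Qtilde n M eps (x + t \<cdot>\<^sub>v e)) has_vector_derivative
      (?E \<bullet> ((M * ?G0) *\<^sub>v ?X) + ?X \<bullet> ((M * ?G') *\<^sub>v ?X) + ?X \<bullet> ((M * ?G0) *\<^sub>v ?E))) (at 0)"
    by (rule has_vector_derivative_transform_eventually)
  moreover have "minv (Dmat n M eps x) = ?G0" using minv_eq_adj_inv[OF cD d0] D0 by simp
  ultimately show ?thesis by (simp only:)
qed

text \<open>\<open>\<Gamma>\<close> stands for \<open>Jform_grad n\<close> (see \<open>grad_Qtilde\<close>); it is kept abstract for the symmetry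
  argument, which only uses how it interacts with \<open>B\<close>.\<close>

definition Qtilde_grad_formula :: "complex mat \<Rightarrow> complex mat \<Rightarrow> complex mat \<Rightarrow> complex vec \<Rightarrow> complex
   \<Rightarrow> (complex vec \<Rightarrow> complex vec \<Rightarrow> complex vec) \<Rightarrow> complex vec" where
  "Qtilde_grad_formula M G J X c \<Gamma> = (M * G) *\<^sub>v X + transpose_mat (M * G) *\<^sub>v X
     + c \<cdot>\<^sub>v (\<Gamma> (transpose_mat (M * G) *\<^sub>v X) ((M * J * M * G) *\<^sub>v X)
              + \<Gamma> (transpose_mat (M * G * J * M) *\<^sub>v X) ((M * G) *\<^sub>v X))"

lemma Qtilde_deriv_unit_vec_eq:
  fixes M G J0 Je :: "complex mat" and X :: "complex vec" and c :: complex
  assumes cM: "M \<in> carrier_mat N N" and cG: "G \<in> carrier_mat N N" and cJ0: "J0 \<in> carrier_mat N N"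
    and cJe: "Je \<in> carrier_mat N N" and X: "X \<in> carrier_vec N" and i: "i < N"
  shows "unit_vec N i \<bullet> ((M * G) *\<^sub>v X)
       + X \<bullet> ((M * (- (G * (0\<^sub>m N N - c \<cdot>\<^sub>m ((Je * M) * (J0 * M) + (J0 * M) * (Je * M))) * G))) *\<^sub>v X)
       + X \<bullet> ((M * G) *\<^sub>v unit_vec N i)
     = ((M * G) *\<^sub>v X) $ i + (transpose_mat (M * G) *\<^sub>v X) $ i
       + c * ((transpose_mat (M * G) *\<^sub>v X) \<bullet> (Je *\<^sub>v ((M * J0 * M * G) *\<^sub>v X))
             + (transpose_mat (M * G * J0 * M) *\<^sub>v X) \<bullet> (Je *\<^sub>v ((M * G) *\<^sub>v X)))"
proof -
  have "X \<bullet> ((M * G) *\<^sub>v unit_vec N i) = (transpose_mat (M * G) *\<^sub>v X) \<bullet> unit_vec N i"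
    using transpose_vec_mult_scalar[of "M * G" N N "unit_vec N i" X] cM cG X by simp
  moreover have "X \<bullet> ((M * (- (G * (0\<^sub>m N N - c \<cdot>\<^sub>m ((Je * M) * (J0 * M) + (J0 * M) * (Je * M))) * G))) *\<^sub>v X)
     = c * ((transpose_mat (M * G) *\<^sub>v X) \<bullet> (Je *\<^sub>v ((M * J0 * M * G) *\<^sub>v X))
             + (transpose_mat (M * G * J0 * M) *\<^sub>v X) \<bullet> (Je *\<^sub>v ((M * G) *\<^sub>v X)))"
    using cM cG cJ0 cJe X by (simp add: sq_rules[where N=N] algebra_simps)
  ultimately show ?thesis using i cM cG X by simp
qed

lemma grad_Qtilde:
  fixes M :: "complex mat" and x :: "real vec"
  assumes M: "M \<in> carrier_mat (2*n) (2*n)" and x: "x \<in> carrier_vec (2*n)"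
    and inv: "invertible_mat (Dmat n M eps x)"
  shows "grad (2*n) (Qtilde n M eps) x
    = Qtilde_grad_formula M (minv (Dmat n M eps x)) (Jc n x) (cvec x) (complex_of_real (eps^2)) (Jform_grad n)"
proof (rule eq_vecI)
  let ?G = "minv (Dmat n M eps x)" and ?c = "complex_of_real (eps^2)"
  have cG: "?G \<in> carrier_mat (2*n) (2*n)" using minv_invertible(1)[OF Dmat_carrier[OF M] inv] .
  have dim: "dim_vec (Qtilde_grad_formula M ?G (Jc n x) (cvec x) ?c (Jform_grad n)) = 2*n"
    unfolding Qtilde_grad_formula_def using M cG by simp
  then show "dim_vec (grad (2*n) (Qtilde n M eps) x)
      = dim_vec (Qtilde_grad_formula M ?G (Jc n x) (cvec x) ?c (Jform_grad n))"
    unfolding grad_def by simp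
  fix i assume "i < dim_vec (Qtilde_grad_formula M ?G (Jc n x) (cvec x) ?c (Jform_grad n))"
  then have i: "i < 2*n" using dim by simp
  let ?e = "unit_vec (2*n) i :: real vec"
  note d = Qtilde_directional_deriv[OF M x _ inv, of ?e, unfolded cvec_unit_vec, simplified]
  have "pderiv_at (2*n) (Qtilde n M eps) x i =
      unit_vec (2*n) i \<bullet> ((M * ?G) *\<^sub>v cvec x)
       + cvec x \<bullet> ((M * (- (?G * (0\<^sub>m (2*n) (2*n) - ?c \<cdot>\<^sub>m
            ((Jc n ?e * M) * (Jc n x * M) + (Jc n x * M) * (Jc n ?e * M))) * ?G))) *\<^sub>v cvec x)
       + cvec x \<bullet> ((M * ?G) *\<^sub>v unit_vec (2*n) i)"
    unfolding pderiv_at_def using d by (auto intro: has_vector_derivative_unique_at)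
  also have "\<dots> = Qtilde_grad_formula M ?G (Jc n x) (cvec x) ?c (Jform_grad n) $ i"
    unfolding Qtilde_deriv_unit_vec_eq[OF M cG Jc_carrier Jc_carrier cvec_carrier[OF x] i]
    unfolding Qtilde_grad_formula_def Jform_grad_def using i M cG x by simp
  finally show "grad (2*n) (Qtilde n M eps) x $ i
      = Qtilde_grad_formula M ?G (Jc n x) (cvec x) ?c (Jform_grad n) $ i"
    unfolding grad_def using i by simp
qed

section \<open>Transformation under \<open>B\<close>\<close>

lemma mult_mat_assoc_eq:
  assumes eq: "A * B = C * D" and A: "A \<in> carrier_mat N N" and B: "B \<in> carrier_mat N N"
    and C: "C \<in> carrier_mat N N" and D: "D \<in> carrier_mat N N" and Z: "Z \<in> carrier_mat N N"
  shows "A * (B * Z) = C * (D * (Z :: 'a :: comm_ring_1 mat))"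
  using assoc_mult_mat[OF A B Z] assoc_mult_mat[OF C D Z] eq by simp

lemma intertwined_products:
  fixes B H J G :: "complex mat"
  assumes cB: "B \<in> carrier_mat N N" and cH: "H \<in> carrier_mat N N" and cJ: "J \<in> carrier_mat N N"
    and cG: "G \<in> carrier_mat N N"
    and BH: "B * H = H * transpose_mat B" and BJ: "transpose_mat B * J = J * B"
    and BB: "B * B = 1\<^sub>m N" and GB: "G * transpose_mat B = transpose_mat B * G"
  shows "transpose_mat (B * H * G) = B * transpose_mat (H * G)"
    and "B * H * J * (B * H) * G = H * J * H * G"
    and "B * H * G * J * (B * H) = H * G * J * H"
proof -
  have cBT: "transpose_mat B \<in> carrier_mat N N" using cB by simp
  note BH' = mult_mat_assoc_eq[OF BH cB cH cH cBT]
  note BJ' = mult_mat_assoc_eq[OF BJ cBT cJ cJ cB]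
  note GB' = mult_mat_assoc_eq[OF GB cG cBT cBT cG]
  have BB': "B * (B * Z) = Z" if "Z \<in> carrier_mat N N" for Z
    using assoc_mult_mat[OF cB cB that] BB that by simp
  have "B * H * G = H * G * transpose_mat B"
    using cB cH cG cBT by (simp add: sq_rules[where N=N] BH' GB)
  then show "transpose_mat (B * H * G) = B * transpose_mat (H * G)"
    using transpose_mult[of "H * G" N N "transpose_mat B" N] cH cG cBT by simp
  show "B * H * J * (B * H) * G = H * J * H * G"
    using cB cH cJ cG cBT by (simp add: sq_rules[where N=N] BH' BJ' BB')
  show "B * H * G * J * (B * H) = H * G * J * H"
    using cB cH cJ cG cBT by (simp add: sq_rules[where N=N] BH' BJ' BB' GB'[symmetric])
qed

lemma mult_mat_vec_linear_comb:
  assumes B: "B \<in> carrier_mat N N" and "a \<in> carrier_vec N" "b \<in> carrier_vec N" "d \<in> carrier_vec N"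
    "e \<in> carrier_vec N"
  shows "B *\<^sub>v (a + b + c \<cdot>\<^sub>v (d + e)) = B *\<^sub>v a + B *\<^sub>v b + c \<cdot>\<^sub>v (B *\<^sub>v d + B *\<^sub>v (e :: 'a :: field vec))"
proof -
  have "B *\<^sub>v (a + b + c \<cdot>\<^sub>v (d + e)) = B *\<^sub>v (a + b) + B *\<^sub>v (c \<cdot>\<^sub>v (d + e))"
    by (rule mult_add_distrib_mat_vec[OF B]) (use assms in auto)
  also have "B *\<^sub>v (a + b) = B *\<^sub>v a + B *\<^sub>v b" by (rule mult_add_distrib_mat_vec) (use assms in auto)
  also have "B *\<^sub>v (c \<cdot>\<^sub>v (d + e)) = c \<cdot>\<^sub>v (B *\<^sub>v (d + e))" by (rule mult_mat_vec) (use assms in auto)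
  also have "B *\<^sub>v (d + e) = B *\<^sub>v d + B *\<^sub>v e" by (rule mult_add_distrib_mat_vec) (use assms in auto)
  finally show ?thesis .
qed

lemma Qtilde_grad_formula_intertwine:
  fixes B H J G :: "complex mat" and X :: "complex vec" and c :: complex
    and \<Gamma> :: "complex vec \<Rightarrow> complex vec \<Rightarrow> complex vec"
  assumes cB: "B \<in> carrier_mat N N" and cH: "H \<in> carrier_mat N N" and cJ: "J \<in> carrier_mat N N"
    and cG: "G \<in> carrier_mat N N" and X: "X \<in> carrier_vec N"
    and BH: "B * H = H * transpose_mat B" and BJ: "transpose_mat B * J = J * B"
    and BB: "B * B = 1\<^sub>m N" and GB: "G * transpose_mat B = transpose_mat B * G"
    and \<Gamma>_right: "\<And>p q. p \<in> carrier_vec N \<Longrightarrow> q \<in> carrier_vec N \<Longrightarrow> \<Gamma> p (B *\<^sub>v q) = B *\<^sub>v \<Gamma> p q"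
    and \<Gamma>_left: "\<And>p q. p \<in> carrier_vec N \<Longrightarrow> q \<in> carrier_vec N \<Longrightarrow> \<Gamma> (B *\<^sub>v p) q = \<Gamma> p (B *\<^sub>v q)"
    and \<Gamma>_carrier: "\<And>p q. \<Gamma> p q \<in> carrier_vec N"
  shows "Qtilde_grad_formula (B * H) G J X c \<Gamma> = B *\<^sub>v Qtilde_grad_formula H G J X c \<Gamma>"
proof -
  note prod = intertwined_products[OF cB cH cJ cG BH BJ BB GB]
  let ?p = "transpose_mat (H * G) *\<^sub>v X" and ?q = "(H * J * H * G) *\<^sub>v X"
    and ?r = "transpose_mat (H * G * J * H) *\<^sub>v X" and ?s = "(H * G) *\<^sub>v X"
  have c: "?p \<in> carrier_vec N" "?q \<in> carrier_vec N" "?r \<in> carrier_vec N" "?s \<in> carrier_vec N"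
    "\<Gamma> ?p ?q \<in> carrier_vec N" "\<Gamma> ?r ?s \<in> carrier_vec N"
    using cH cJ cG X \<Gamma>_carrier by auto
  have "Qtilde_grad_formula (B * H) G J X c \<Gamma>
      = B *\<^sub>v ?s + B *\<^sub>v ?p + c \<cdot>\<^sub>v (\<Gamma> (B *\<^sub>v ?p) ?q + \<Gamma> ?r (B *\<^sub>v ?s))"
    unfolding Qtilde_grad_formula_def prod using cB cH cG X by (simp add: sq_rules[where N=N])
  also have "\<dots> = B *\<^sub>v ?s + B *\<^sub>v ?p + c \<cdot>\<^sub>v (B *\<^sub>v \<Gamma> ?p ?q + B *\<^sub>v \<Gamma> ?r ?s)"
    using \<Gamma>_left[OF c(1,2)] \<Gamma>_right[OF c(1,2)] \<Gamma>_right[OF c(3,4)] by simp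
  also have "\<dots> = B *\<^sub>v (?s + ?p + c \<cdot>\<^sub>v (\<Gamma> ?p ?q + \<Gamma> ?r ?s))"
    by (rule mult_mat_vec_linear_comb[OF cB c(4,1,5,6), symmetric])
  also have "\<dots> = B *\<^sub>v Qtilde_grad_formula H G J X c \<Gamma>"
    unfolding Qtilde_grad_formula_def by simp
  finally show ?thesis .
qed

context
  fixes n :: nat and H :: "real mat" and \<alpha> :: "nat \<Rightarrow> complex"
  assumes Hdim: "H \<in> carrier_mat (2*n) (2*n)"
    and Hadm: "Amat n * H = H * transpose_mat (Amat n)"
    and Bsq: "Bmat n \<alpha> * Bmat n \<alpha> = 1\<^sub>m (2*n)"
begin

lemma Dmat_Bmat_mult: "Dmat n (Bmat n \<alpha> * map_mat complex_of_real H) eps x = Dmat n (map_mat complex_of_real H) eps x"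
proof -
  let ?H = "map_mat complex_of_real H" and ?B = "Bmat n \<alpha>" and ?J = "Jc n x"
  have c: "?H \<in> carrier_mat (2*n) (2*n)" "?B \<in> carrier_mat (2*n) (2*n)" "?J \<in> carrier_mat (2*n) (2*n)"
    "transpose_mat ?B \<in> carrier_mat (2*n) (2*n)" using Hdim by auto
  note BH' = mult_mat_assoc_eq[OF Bmat_Hc[OF Hdim Hadm] c(2,1,1,4)]
  note BJ' = mult_mat_assoc_eq[OF transpose_Bmat_Jc c(4,3,3,2)]
  have BB': "?B * (?B * Z) = Z" if "Z \<in> carrier_mat (2*n) (2*n)" for Z
    using assoc_mult_mat[OF c(2) c(2) that] Bsq that by simp
  show ?thesis unfolding Dmat_def using c by (simp add: sq_rules[where N="2*n"] BH' BJ' BB')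
qed

lemma minv_Dmat_transpose_Bmat:
  assumes inv: "invertible_mat (Dmat n (map_mat complex_of_real H) eps x)"
  defines "G \<equiv> minv (Dmat n (map_mat complex_of_real H) eps x)"
  shows "G * transpose_mat (Bmat n \<alpha>) = transpose_mat (Bmat n \<alpha>) * G"
proof -
  let ?H = "map_mat complex_of_real H" and ?B = "Bmat n \<alpha>" and ?BT = "transpose_mat (Bmat n \<alpha>)"
    and ?J = "Jc n x" and ?D = "Dmat n (map_mat complex_of_real H) eps x"
  have c: "?H \<in> carrier_mat (2*n) (2*n)" "?B \<in> carrier_mat (2*n) (2*n)" "?J \<in> carrier_mat (2*n) (2*n)"
    "?BT \<in> carrier_mat (2*n) (2*n)" "?D \<in> carrier_mat (2*n) (2*n)" using Hdim Dmat_carrier by auto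
  have cG: "G \<in> carrier_mat (2*n) (2*n)" and DG: "?D * G = 1\<^sub>m (2*n)" and GD: "G * ?D = 1\<^sub>m (2*n)"
    using minv_invertible[OF c(5) inv] unfolding G_def by auto
  note BH' = mult_mat_assoc_eq[OF Bmat_Hc[OF Hdim Hadm] c(2,1,1,4)]
  note BJ' = mult_mat_assoc_eq[OF transpose_Bmat_Jc c(4,3,3,2)]
  have BD: "?BT * ?D = ?D * ?BT"
    unfolding Dmat_def using c
    by (simp add: sq_rules[where N="2*n"] BJ' BH' Bmat_Hc[OF Hdim Hadm] right_mult_one_mat[OF c(4)]
        left_mult_one_mat[OF c(4)])
  have "G * ?BT = G * (?BT * (?D * G))" using DG right_mult_one_mat[OF c(4)] by simp
  also have "\<dots> = G * ((?BT * ?D) * G)" using c cG by (simp add: sq_rules[where N="2*n"])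
  also have "\<dots> = G * ((?D * ?BT) * G)" by (simp add: BD)
  also have "\<dots> = (G * ?D) * (?BT * G)" using c cG by (simp add: sq_rules[where N="2*n"])
  also have "\<dots> = ?BT * G" using GD left_mult_one_mat[OF mult_carrier_mat_square[OF c(4) cG]] by simp
  finally show ?thesis .
qed

lemma grad_Qtilde_Bmat_mult:
  assumes x: "x \<in> carrier_vec (2*n)"
    and inv: "invertible_mat (Dmat n (map_mat complex_of_real H) eps x)"
  shows "grad (2*n) (Qtilde n (Bmat n \<alpha> * map_mat complex_of_real H) eps) x
    = Bmat n \<alpha> *\<^sub>v grad (2*n) (Qtilde n (map_mat complex_of_real H) eps) x"
proof -
  let ?H = "map_mat complex_of_real H" and ?B = "Bmat n \<alpha>"
  let ?G = "minv (Dmat n ?H eps x)"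
  have cH: "?H \<in> carrier_mat (2*n) (2*n)" using Hdim by simp
  have cG: "?G \<in> carrier_mat (2*n) (2*n)" using minv_invertible(1)[OF Dmat_carrier[OF cH] inv] .
  have cK: "?B * ?H \<in> carrier_mat (2*n) (2*n)" using cH by simp
  have invK: "invertible_mat (Dmat n (?B * ?H) eps x)" using inv by (simp add: Dmat_Bmat_mult)
  have "grad (2*n) (Qtilde n (?B * ?H) eps) x
      = Qtilde_grad_formula (?B * ?H) ?G (Jc n x) (cvec x) (complex_of_real (eps^2)) (Jform_grad n)"
    using grad_Qtilde[OF cK x invK] by (simp only: Dmat_Bmat_mult)
  also have "\<dots> = ?B *\<^sub>v Qtilde_grad_formula ?H ?G (Jc n x) (cvec x) (complex_of_real (eps^2)) (Jform_grad n)"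
    by (rule Qtilde_grad_formula_intertwine[OF Bmat_carrier cH Jc_carrier cG cvec_carrier[OF x]
          Bmat_Hc[OF Hdim Hadm] transpose_Bmat_Jc Bsq minv_Dmat_transpose_Bmat[OF inv]])
      (auto simp: Jform_grad_Bmat_right Jform_grad_Bmat_left)
  also have "\<dots> = ?B *\<^sub>v grad (2*n) (Qtilde n ?H eps) x" by (simp only: grad_Qtilde[OF cH x inv])
  finally show ?thesis .
qed

end

section \<open>The Poisson tensor \<open>\<Pi>\<close>\<close>

lemma Pimat_eq:
  assumes Hdim: "H \<in> carrier_mat (2*n) (2*n)"
  shows "Pimat n H eps x = Jc n x - complex_of_real (eps^2) \<cdot>\<^sub>m
    (Jc n x * (map_mat complex_of_real H * (Jc n x * (map_mat complex_of_real H * Jc n x))))"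
proof -
  have cJ: "Jmat n x \<in> carrier_mat (2*n) (2*n)" using Jc_carrier[of n x] unfolding Jc_def by simp
  have "map_mat complex_of_real (Jmat n x * H * Jmat n x * H * Jmat n x)
      = Jc n x * map_mat complex_of_real H * Jc n x * map_mat complex_of_real H * Jc n x"
    using cJ Hdim unfolding Jc_def
    by (simp add: of_real_hom.mat_hom_mult[where nr="2*n" and n="2*n" and nc="2*n"])
  moreover have "map_mat complex_of_real (Jmat n x - (eps^2) \<cdot>\<^sub>m (Jmat n x * H * Jmat n x * H * Jmat n x))
      = Jc n x - complex_of_real (eps^2) \<cdot>\<^sub>m map_mat complex_of_real (Jmat n x * H * Jmat n x * H * Jmat n x)"
    using cJ Hdim unfolding Jc_def by (intro eq_matI) auto
  ultimately show ?thesis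
    unfolding Pimat_def using Hdim by (simp add: sq_rules[where N="2*n"])
qed

lemma Pimat_carrier:
  "H \<in> carrier_mat (2*n) (2*n) \<Longrightarrow> Pimat n H eps x \<in> carrier_mat (2*n) (2*n)"
  by (simp add: Pimat_eq sq_rules[where N="2*n"])

lemma Pimat_skew:
  assumes Hdim: "H \<in> carrier_mat (2*n) (2*n)" and Hsym: "transpose_mat H = H"
  shows "transpose_mat (Pimat n H eps x) = - Pimat n H eps x"
proof -
  let ?H = "map_mat complex_of_real H" and ?J = "Jc n x"
  let ?Y = "?J * (?H * (?J * (?H * ?J)))"
  have HT: "transpose_mat ?H = ?H" using Hsym by (simp add: map_mat_transpose)
  have cY: "?Y \<in> carrier_mat (2*n) (2*n)" using Hdim by simp
  have YT: "transpose_mat ?Y = - ?Y"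
    using Hdim by (simp add: sq_tr_mult[where N="2*n"] Jc_skew HT sq_rules[where N="2*n"])
  have "transpose_mat (Pimat n H eps x) = transpose_mat ?J - complex_of_real (eps^2) \<cdot>\<^sub>m transpose_mat ?Y"
    unfolding Pimat_eq[OF Hdim]
    using transpose_minus[of ?J "2*n" "2*n" "complex_of_real (eps^2) \<cdot>\<^sub>m ?Y"] cY
    by (simp add: transpose_smult_mat)
  also have "\<dots> = - Pimat n H eps x"
    unfolding Pimat_eq[OF Hdim] YT Jc_skew by (rule eq_matI) (use cY in auto)
  finally show ?thesis .
qed

lemma transpose_Bmat_Pimat:
  assumes Hdim: "H \<in> carrier_mat (2*n) (2*n)" and Hadm: "Amat n * H = H * transpose_mat (Amat n)"
  shows "transpose_mat (Bmat n \<alpha>) * Pimat n H eps x = Pimat n H eps x * Bmat n \<alpha>"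
proof -
  let ?H = "map_mat complex_of_real H" and ?B = "Bmat n \<alpha>" and ?BT = "transpose_mat (Bmat n \<alpha>)"
    and ?J = "Jc n x"
  have c: "?H \<in> carrier_mat (2*n) (2*n)" "?B \<in> carrier_mat (2*n) (2*n)" "?J \<in> carrier_mat (2*n) (2*n)"
    "?BT \<in> carrier_mat (2*n) (2*n)" using Hdim by auto
  note BJ' = mult_mat_assoc_eq[OF transpose_Bmat_Jc c(4,3,3,2)]
  note BH' = mult_mat_assoc_eq[OF Bmat_Hc[OF Hdim Hadm] c(2,1,1,4)]
  note BTH' = mult_mat_assoc_eq[OF transpose_Bmat_Hc[OF Hdim Hadm] c(4,1,1,2)]
  show ?thesis
    unfolding Pimat_eq[OF Hdim] using c by (simp add: sq_rules[where N="2*n"] BJ' BH' BTH' transpose_Bmat_Jc)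
qed

theorem mainTheorem5:
  fixes n :: nat and H :: "real mat" and \<alpha> :: "nat \<Rightarrow> complex"
    and eps :: real and x :: "real vec"
  assumes n2: "n \<ge> 2"
    and Hdim: "H \<in> carrier_mat (2*n) (2*n)"
    and Hsym: "transpose_mat H = H"
    and Hadm: "Amat n * H = H * transpose_mat (Amat n)"
    and Bsq: "Bmat n \<alpha> * Bmat n \<alpha> = 1\<^sub>m (2*n)"
    and xdim: "x \<in> carrier_vec (2*n)"
    and invH: "invertible_mat (Dmat n (map_mat complex_of_real H) eps x)"
    and invK: "invertible_mat (Dmat n (Bmat n \<alpha> * map_mat complex_of_real H) eps x)"
  shows "bracket (2*n) (Jc n x)
           (Qtilde n (map_mat complex_of_real H) eps)
           (Qtilde n (Bmat n \<alpha> * map_mat complex_of_real H) eps) x = 0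
       \<and> bracket (2*n) (Pimat n H eps x)
           (Qtilde n (map_mat complex_of_real H) eps)
           (Qtilde n (Bmat n \<alpha> * map_mat complex_of_real H) eps) x = 0"
proof -
  let ?g = "grad (2*n) (Qtilde n (map_mat complex_of_real H) eps) x"
  have g: "?g \<in> carrier_vec (2*n)" unfolding grad_def by simp
  show ?thesis
    unfolding bracket_def grad_Qtilde_Bmat_mult[OF Hdim Hadm Bsq xdim invH]
    using skew_bracket_intertwining_zero[OF Jc_carrier Bmat_carrier Jc_skew transpose_Bmat_Jc g]
      skew_bracket_intertwining_zero[OF Pimat_carrier[OF Hdim] Bmat_carrier Pimat_skew[OF Hdim Hsym]
        transpose_Bmat_Pimat[OF Hdim Hadm] g]
    by simp
qed

end
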